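(* (a) (Cochain version) Let $A=(P(V),d_A)$ be a 1-connected minimal quasi-free cochain $P$-algebra and let $B$ be a cochain $P$-algebra whose cohomology is concentrated in degrees $\leq n$. Then every cochain $P$-algebra map $f_{n-1}\colon A_{n-1}\to B$ extends to a cochain $P$-algebra map $f_n\colon A_n\to B$. (b) (Chain version) Let $A=(P(V),d_A)$ be a 1-connected minimal quasi-free chain $P$-algebra and let $B$ be a chain $P$-algebra whose homology is concentrated in degrees $\leq n$. Then every chain $P$-algebra map $f_{n+1}\colon A_{n+1}\to B$ extends to a chain $P$-algebra map $f_{n+2}\colon A_{n+2}\to B$.
   Context: Fix a field $k$ of characteristic zero and an operad $P$ in $k$-vector spaces (viewed in degree $0$) with $P(1)=k$ and either $P(0)=k$ or $P(0)=0$. Cochain algebras have differential of degree $+1$, chain algebras of degree $-1$; the degree-$m$ part of $C$ is written $C^m$. A cochain $P$-algebra is 1-connected if concentrated in non-negative degrees with $A^0=P(0)$ and $A^1=0$; a chain $P$-algebra is 1-connected if concentrated in non-negative homological degrees with $A^0=P(0)$. Quasi-free means the underlying graded $P$-algebra is free $P(V)=\bigoplus_iP(i)\otimes_{k[\Sigma_i]}V^{\otimes i}$. A 1-connected quasi-free $(P(V),d)$ is minimal if $d(V)\subset\bigoplus_{i\geq2}P(i)\otimes_{k[\Sigma_i]}V^{\otimes i}$. $A_m$ denotes the subalgebra $(P(V^{\leq m}),d|_{P(V^{\leq m})})$. *)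

theory Defs
  imports Main "HOL.Vector_Spaces" "HOL-Combinatorics.Permutations"
begin

definition lin_subspace :: "('k \<Rightarrow> 'v \<Rightarrow> 'v) \<Rightarrow> 'v::ab_group_add set \<Rightarrow> bool" where
  "lin_subspace sc S \<longleftrightarrow> 0 \<in> S \<and> (\<forall>x\<in>S. \<forall>y\<in>S. x + y \<in> S) \<and> (\<forall>c. \<forall>x\<in>S. sc c x \<in> S)"

definition lspan :: "('k \<Rightarrow> 'v \<Rightarrow> 'v) \<Rightarrow> 'v::ab_group_add set \<Rightarrow> 'v set" where
  "lspan sc S = {x. \<exists>cs ys. set ys \<subseteq> S \<and> length cs = length ys \<and>
                      x = (\<Sum>i<length ys. sc (cs ! i) (ys ! i))}"

definition ksign :: "int \<Rightarrow> 'k::field" where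
  "ksign i = (if even i then 1 else -1)"

definition plist :: "(nat \<Rightarrow> nat) \<Rightarrow> 'x list \<Rightarrow> 'x list" where
  "plist r xs = map (\<lambda>i. xs ! r i) [0..<length xs]"

definition offs :: "nat list \<Rightarrow> nat \<Rightarrow> nat" where
  "offs ks j = sum_list (take j ks)"

definition blk :: "nat list \<Rightarrow> nat \<Rightarrow> nat" where
  "blk ks p = (LEAST b. p < offs ks (Suc b))"

text \<open>Block permutation induced by r on blocks of sizes ks.\<close>
definition blk_perm :: "nat list \<Rightarrow> (nat \<Rightarrow> nat) \<Rightarrow> nat \<Rightarrow> nat" where
  "blk_perm ks r p = (let ks' = plist r ks; b = blk ks' p in offs ks (r b) + (p - offs ks' b))"

text \<open>Block sum of permutations ts, the i-th acting on the i-th block of size ks!i.\<close>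
definition sum_perm :: "nat list \<Rightarrow> (nat \<Rightarrow> nat) list \<Rightarrow> nat \<Rightarrow> nat" where
  "sum_perm ks ts p = (let b = blk ks p in offs ks b + (ts ! b) (p - offs ks b))"

text \<open>Koszul sign of reordering elements of degrees ds into the order ds!(r 0), ds!(r 1), ...\<close>
definition koszul :: "(nat \<Rightarrow> nat) \<Rightarrow> int list \<Rightarrow> 'k::field" where
  "koszul r ds = ksign (\<Sum>a<length ds. \<Sum>b<length ds.
       if a < b \<and> r b < r a then ds ! (r a) * ds ! (r b) else 0)"

section \<open>Operads in k-vector spaces (concentrated in degree 0)\<close>

text \<open>Operations of arity n form the subspace Pa n of the vector space 'o.
  operm mu r is the operation (x_0,...,x_{n-1}) |-> mu(x_{r 0},...,x_{r (n-1)}).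
  ocomp mu [nu_1..nu_n] is the full composition mu(nu_1,...,nu_n).\<close>
record ('k, 'o) operad =
  Pa :: "nat \<Rightarrow> 'o set"
  osc :: "'k \<Rightarrow> 'o \<Rightarrow> 'o"
  ocomp :: "'o \<Rightarrow> 'o list \<Rightarrow> 'o"
  operm :: "'o \<Rightarrow> (nat \<Rightarrow> nat) \<Rightarrow> 'o"
  ounit :: 'o

definition is_operad :: "('k::field, 'o::ab_group_add) operad \<Rightarrow> bool" where
  "is_operad P \<longleftrightarrow>
     vector_space (osc P) \<and>
     (\<forall>n. lin_subspace (osc P) (Pa P n)) \<and>
     ounit P \<in> Pa P 1 \<and>
     \<comment> \<open>composition lands in the right arity\<close>
     (\<forall>n mu nus ks. mu \<in> Pa P n \<and> length nus = n \<and> length ks = n \<and>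
        (\<forall>i<n. nus ! i \<in> Pa P (ks ! i)) \<longrightarrow> ocomp P mu nus \<in> Pa P (sum_list ks)) \<and>
     \<comment> \<open>multilinearity of composition\<close>
     (\<forall>n mu mu' nus c. mu \<in> Pa P n \<and> mu' \<in> Pa P n \<and> length nus = n \<and>
        (\<forall>nu\<in>set nus. \<exists>k. nu \<in> Pa P k) \<longrightarrow>
        ocomp P (mu + mu') nus = ocomp P mu nus + ocomp P mu' nus \<and>
        ocomp P (osc P c mu) nus = osc P c (ocomp P mu nus)) \<and>
     (\<forall>n mu nus i k nu nu' c. mu \<in> Pa P n \<and> length nus = n \<and>
        (\<forall>nu\<in>set nus. \<exists>k. nu \<in> Pa P k) \<and> i < n \<and> nu \<in> Pa P k \<and> nu' \<in> Pa P k \<longrightarrow>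
        ocomp P mu (nus[i := nu + nu']) = ocomp P mu (nus[i := nu]) + ocomp P mu (nus[i := nu']) \<and>
        ocomp P mu (nus[i := osc P c nu]) = osc P c (ocomp P mu (nus[i := nu]))) \<and>
     \<comment> \<open>unit laws\<close>
     (\<forall>n mu. mu \<in> Pa P n \<longrightarrow>
        ocomp P (ounit P) [mu] = mu \<and> ocomp P mu (replicate n (ounit P)) = mu) \<and>
     \<comment> \<open>associativity\<close>
     (\<forall>n mu nus rss. mu \<in> Pa P n \<and> length nus = n \<and> length rss = n \<and>
        (\<forall>i<n. nus ! i \<in> Pa P (length (rss ! i))) \<and>
        (\<forall>r\<in>set (concat rss). \<exists>k. r \<in> Pa P k) \<longrightarrow>
        ocomp P (ocomp P mu nus) (concat rss) = ocomp P mu (map (\<lambda>i. ocomp P (nus ! i) (rss ! i)) [0..<n])) \<and>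
     \<comment> \<open>symmetric group actions\<close>
     (\<forall>n mu mu' r r' c. mu \<in> Pa P n \<and> mu' \<in> Pa P n \<and> r permutes {..<n} \<and> r' permutes {..<n} \<longrightarrow>
        operm P mu r \<in> Pa P n \<and> operm P mu id = mu \<and>
        operm P (operm P mu r) r' = operm P mu (r' \<circ> r) \<and>
        operm P (mu + mu') r = operm P mu r + operm P mu' r \<and>
        operm P (osc P c mu) r = osc P c (operm P mu r)) \<and>
     \<comment> \<open>equivariance of composition\<close>
     (\<forall>n mu nus ks r. mu \<in> Pa P n \<and> length nus = n \<and> length ks = n \<and>
        (\<forall>i<n. nus ! i \<in> Pa P (ks ! i)) \<and> r permutes {..<n} \<longrightarrow>
        ocomp P (operm P mu r) nus = operm P (ocomp P mu (plist r nus)) (blk_perm ks r)) \<and>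
     (\<forall>n mu nus ks ts. mu \<in> Pa P n \<and> length nus = n \<and> length ks = n \<and> length ts = n \<and>
        (\<forall>i<n. nus ! i \<in> Pa P (ks ! i) \<and> (ts ! i) permutes {..<ks ! i}) \<longrightarrow>
        ocomp P mu (map (\<lambda>i. operm P (nus ! i) (ts ! i)) [0..<n]) = operm P (ocomp P mu nus) (sum_perm ks ts))"

text \<open>Standing assumptions: P(1) = k and (P(0) = k or P(0) = 0).\<close>
definition std_operad :: "('k::field, 'o::ab_group_add) operad \<Rightarrow> bool" where
  "std_operad P \<longleftrightarrow> is_operad P \<and>
     ounit P \<noteq> 0 \<and> Pa P 1 = range (\<lambda>c. osc P c (ounit P)) \<and>
     (Pa P 0 = {0} \<or> (\<exists>u. u \<noteq> 0 \<and> Pa P 0 = range (\<lambda>c. osc P c u)))"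

section \<open>Differential graded P-algebras\<close>

text \<open>A graded vector space is a family Car m (m :: int) of subspaces of 'a with
  pairwise trivial intersections; all structure is given on homogeneous elements.
  The differential has degree e (e = 1: cochain, e = -1: chain, Car m = C_m).\<close>
record ('k, 'a, 'o) dgpalg =
  Car :: "int \<Rightarrow> 'a set"
  asc :: "'k \<Rightarrow> 'a \<Rightarrow> 'a"
  act :: "'o \<Rightarrow> 'a list \<Rightarrow> 'a"
  dif :: "'a \<Rightarrow> 'a"

definition homog :: "(int \<Rightarrow> 'a set) \<Rightarrow> int list \<Rightarrow> 'a list \<Rightarrow> bool" where
  "homog C ds xs \<longleftrightarrow> length ds = length xs \<and> (\<forall>i<length xs. xs ! i \<in> C (ds ! i))"

definition is_palg :: "('k::field, 'o::ab_group_add) operad \<Rightarrow> ('k, 'a::ab_group_add, 'o) dgpalg \<Rightarrow> bool" where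
  "is_palg P A \<longleftrightarrow>
     vector_space (asc A) \<and>
     (\<forall>m. lin_subspace (asc A) (Car A m)) \<and>
     (\<forall>m m'. m \<noteq> m' \<longrightarrow> Car A m \<inter> Car A m' \<subseteq> {0}) \<and>
     (\<forall>n mu ds xs. mu \<in> Pa P n \<and> length xs = n \<and> homog (Car A) ds xs \<longrightarrow>
        act A mu xs \<in> Car A (sum_list ds)) \<and>
     (\<forall>n mu mu' ds xs c. mu \<in> Pa P n \<and> mu' \<in> Pa P n \<and> length xs = n \<and> homog (Car A) ds xs \<longrightarrow>
        act A (mu + mu') xs = act A mu xs + act A mu' xs \<and>
        act A (osc P c mu) xs = asc A c (act A mu xs)) \<and>
     (\<forall>n mu ds xs i x y c. mu \<in> Pa P n \<and> length xs = n \<and> homog (Car A) ds xs \<and> i < n \<and>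
        x \<in> Car A (ds ! i) \<and> y \<in> Car A (ds ! i) \<longrightarrow>
        act A mu (xs[i := x + y]) = act A mu (xs[i := x]) + act A mu (xs[i := y]) \<and>
        act A mu (xs[i := asc A c x]) = asc A c (act A mu (xs[i := x]))) \<and>
     (\<forall>d x. x \<in> Car A d \<longrightarrow> act A (ounit P) [x] = x) \<and>
     (\<forall>n mu nus xss. mu \<in> Pa P n \<and> length nus = n \<and> length xss = n \<and>
        (\<forall>i<n. nus ! i \<in> Pa P (length (xss ! i)) \<and> (\<exists>ds. homog (Car A) ds (xss ! i))) \<longrightarrow>
        act A (ocomp P mu nus) (concat xss) = act A mu (map (\<lambda>i. act A (nus ! i) (xss ! i)) [0..<n])) \<and>
     (\<forall>n mu ds xs r. mu \<in> Pa P n \<and> length xs = n \<and> homog (Car A) ds xs \<and> r permutes {..<n} \<longrightarrow>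
        act A (operm P mu r) xs = asc A (koszul r ds) (act A mu (plist r xs)))"

definition is_dgpalg :: "('k::field, 'o::ab_group_add) operad \<Rightarrow> int \<Rightarrow> ('k, 'a::ab_group_add, 'o) dgpalg \<Rightarrow> bool" where
  "is_dgpalg P e A \<longleftrightarrow> is_palg P A \<and>
     (\<forall>m x y c. x \<in> Car A m \<and> y \<in> Car A m \<longrightarrow>
        dif A x \<in> Car A (m + e) \<and> dif A (x + y) = dif A x + dif A y \<and>
        dif A (asc A c x) = asc A c (dif A x) \<and> dif A (dif A x) = 0) \<and>
     (\<forall>n mu ds xs. mu \<in> Pa P n \<and> length xs = n \<and> homog (Car A) ds xs \<longrightarrow>
        dif A (act A mu xs) =
          (\<Sum>i<n. asc A (ksign (e * sum_list (take i ds))) (act A mu (xs[i := dif A (xs ! i)]))))"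

definition cochain_palg where "cochain_palg P A \<longleftrightarrow> is_dgpalg P 1 A"
definition chain_palg where "chain_palg P A \<longleftrightarrow> is_dgpalg P (-1) A"

text \<open>Morphisms of dg P-algebras (from the possibly sub-carrier Car A).\<close>
definition dg_hom :: "('k::field, 'o::ab_group_add) operad \<Rightarrow> ('k, 'a::ab_group_add, 'o) dgpalg
     \<Rightarrow> ('k, 'b::ab_group_add, 'o) dgpalg \<Rightarrow> ('a \<Rightarrow> 'b) \<Rightarrow> bool" where
  "dg_hom P A B f \<longleftrightarrow>
     (\<forall>m x y c. x \<in> Car A m \<and> y \<in> Car A m \<longrightarrow>
        f x \<in> Car B m \<and> f (x + y) = f x + f y \<and> f (asc A c x) = asc B c (f x) \<and>
        f (dif A x) = dif B (f x)) \<and>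
     (\<forall>n mu ds xs. mu \<in> Pa P n \<and> length xs = n \<and> homog (Car A) ds xs \<longrightarrow>
        f (act A mu xs) = act B mu (map f xs))"

section \<open>Quasi-free, minimal, 1-connected; the subalgebras A_m\<close>

definition gen_car :: "('k, 'o) operad \<Rightarrow> ('k, 'a::ab_group_add, 'o) dgpalg \<Rightarrow> (int \<Rightarrow> 'a set)
     \<Rightarrow> int \<Rightarrow> int \<Rightarrow> 'a set" where
  "gen_car P A V m j = lspan (asc A) {act A mu xs | mu n ds xs.
      mu \<in> Pa P n \<and> length xs = n \<and> homog V ds xs \<and> (\<forall>d\<in>set ds. d \<le> m) \<and> sum_list ds = j}"

text \<open>A_m = (P(V^{\<le>m}), d restricted).\<close>
definition subalg :: "('k, 'o) operad \<Rightarrow> ('k, 'a::ab_group_add, 'o) dgpalg \<Rightarrow> (int \<Rightarrow> 'a set)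
     \<Rightarrow> int \<Rightarrow> ('k, 'a, 'o) dgpalg" where
  "subalg P A V m = A\<lparr>Car := gen_car P A V m\<rparr>"

text \<open>Generators of the free graded P-algebra P(V): an operation of arity n with n
  degree-tagged elements of V; formal linear combinations are finitely supported
  functions into k. rels are the relations defining
  P(V) = sum_n P(n) (x)_{Sigma_n} V^{(x)n} (multilinearity and Sigma_n-coinvariance
  with Koszul signs).\<close>
definition free_gens :: "('k, 'o) operad \<Rightarrow> (int \<Rightarrow> 'a set) \<Rightarrow> ('o \<times> (int \<times> 'a) list) set" where
  "free_gens P V = {(mu, dxs) | mu n dxs. mu \<in> Pa P n \<and> length dxs = n \<and> (\<forall>(d, x)\<in>set dxs. x \<in> V d)}"

definition dlt :: "'g \<Rightarrow> 'g \<Rightarrow> 'k::field" where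
  "dlt g h = (if h = g then 1 else 0)"

definition free_rels :: "('k::field, 'o::ab_group_add) operad \<Rightarrow> ('k, 'a::ab_group_add, 'o) dgpalg
     \<Rightarrow> (int \<Rightarrow> 'a set) \<Rightarrow> (('o \<times> (int \<times> 'a) list) \<Rightarrow> 'k) set" where
  "free_rels P A V =
     {(\<lambda>h. dlt (mu + mu', dxs) h - dlt (mu, dxs) h - dlt (mu', dxs) h) | mu mu' dxs.
         (mu, dxs) \<in> free_gens P V \<and> (mu', dxs) \<in> free_gens P V} \<union>
     {(\<lambda>h. dlt (osc P c mu, dxs) h - c * dlt (mu, dxs) h) | mu c dxs. (mu, dxs) \<in> free_gens P V} \<union>
     {(\<lambda>h. dlt (mu, dxs[i := (d, x + y)]) h - dlt (mu, dxs[i := (d, x)]) h - dlt (mu, dxs[i := (d, y)]) h)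
        | mu dxs i d x y. (mu, dxs) \<in> free_gens P V \<and> i < length dxs \<and> x \<in> V d \<and> y \<in> V d} \<union>
     {(\<lambda>h. dlt (mu, dxs[i := (d, asc A c x)]) h - c * dlt (mu, dxs[i := (d, x)]) h)
        | mu dxs i d x c. (mu, dxs) \<in> free_gens P V \<and> i < length dxs \<and> x \<in> V d} \<union>
     {(\<lambda>h. dlt (operm P mu r, dxs) h - koszul r (map fst dxs) * dlt (mu, plist r dxs) h)
        | mu dxs r. (mu, dxs) \<in> free_gens P V \<and> r permutes {..<length dxs}}"

inductive_set rspan :: "('g \<Rightarrow> 'k::field) set \<Rightarrow> ('g \<Rightarrow> 'k) set" for R where
  rspan_zero: "(\<lambda>_. 0) \<in> rspan R"
| rspan_step: "r \<in> R \<Longrightarrow> s \<in> rspan R \<Longrightarrow> (\<lambda>g. c * r g + s g) \<in> rspan R"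

text \<open>The underlying graded P-algebra of A is free on the graded subspace V, i.e. the
  canonical map P(V) \<rightarrow> A is bijective in each degree: surjective (A is spanned
  by the P-operations applied to elements of V) and injective (every homogeneous formal
  combination evaluating to 0 lies in the span of the defining relations of P(V)).\<close>
definition quasi_free :: "('k::field, 'o::ab_group_add) operad \<Rightarrow> ('k, 'a::ab_group_add, 'o) dgpalg
     \<Rightarrow> (int \<Rightarrow> 'a set) \<Rightarrow> bool" where
  "quasi_free P A V \<longleftrightarrow>
     (\<forall>d. lin_subspace (asc A) (V d) \<and> V d \<subseteq> Car A d) \<and>
     (\<forall>j. Car A j = lspan (asc A) {act A mu xs | mu n ds xs.
            mu \<in> Pa P n \<and> length xs = n \<and> homog V ds xs \<and> sum_list ds = j}) \<and>
     (\<forall>j (s :: ('o \<times> (int \<times> 'a) list) \<Rightarrow> 'k).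
        finite {g. s g \<noteq> 0} \<and>
        (\<forall>g. s g \<noteq> 0 \<longrightarrow> g \<in> free_gens P V \<and> sum_list (map fst (snd g)) = j) \<and>
        (\<Sum>g\<in>{g. s g \<noteq> 0}. asc A (s g) (act A (fst g) (map snd (snd g)))) = 0
        \<longrightarrow> s \<in> rspan (free_rels P A V))"

text \<open>Minimality: d(V) lies in the image of sum_{i\<ge>2} P(i) (x)_{Sigma_i} V^{(x)i}.
  e is the degree of the differential.\<close>
definition minimal :: "('k::field, 'o::ab_group_add) operad \<Rightarrow> int \<Rightarrow> ('k, 'a::ab_group_add, 'o) dgpalg
     \<Rightarrow> (int \<Rightarrow> 'a set) \<Rightarrow> bool" where
  "minimal P e A V \<longleftrightarrow>
     (\<forall>d. \<forall>v\<in>V d. dif A v \<in> lspan (asc A) {act A mu xs | mu n ds xs.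
         2 \<le> n \<and> mu \<in> Pa P n \<and> length xs = n \<and> homog V ds xs \<and> sum_list ds = d + e})"

text \<open>A^0 = P(0): the unit map P(0) \<rightarrow> A^0, mu \<mapsto> mu(), is bijective.\<close>
definition deg0_is_P0 :: "('k::field, 'o::ab_group_add) operad \<Rightarrow> ('k, 'a::ab_group_add, 'o) dgpalg \<Rightarrow> bool" where
  "deg0_is_P0 P A \<longleftrightarrow> Car A 0 = {act A mu [] | mu. mu \<in> Pa P 0} \<and>
     (\<forall>mu\<in>Pa P 0. act A mu [] = 0 \<longrightarrow> mu = 0)"

definition one_connected_cochain :: "('k::field, 'o::ab_group_add) operad \<Rightarrow> ('k, 'a::ab_group_add, 'o) dgpalg \<Rightarrow> bool" where
  "one_connected_cochain P A \<longleftrightarrow> (\<forall>m<0. Car A m = {0}) \<and> deg0_is_P0 P A \<and> Car A 1 = {0}"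

definition one_connected_chain :: "('k::field, 'o::ab_group_add) operad \<Rightarrow> ('k, 'a::ab_group_add, 'o) dgpalg \<Rightarrow> bool" where
  "one_connected_chain P A \<longleftrightarrow> (\<forall>m<0. Car A m = {0}) \<and> deg0_is_P0 P A"

text \<open>(Co)homology concentrated in degrees \<le> n: in every degree m > n every
  cycle is a boundary (e = degree of the differential).\<close>
definition homology_le :: "int \<Rightarrow> ('k, 'b::ab_group_add, 'o) dgpalg \<Rightarrow> int \<Rightarrow> bool" where
  "homology_le e B n \<longleftrightarrow> (\<forall>m>n. \<forall>x\<in>Car B m. dif B x = 0 \<longrightarrow> (\<exists>y\<in>Car B (m - e). dif B y = x))"

end

theory Submission imports Defs begin

text \<open>
  Write L for the degree being added (n in the cochain case, n + 2 in the chain case) and e = +-1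
  for the degree of the differential. Since A is 1-connected, its nonzero generators have degree at
  least 2 resp. 1, so by minimality the differential of a generator of degree at most L is a sum of
  operations applied to at least two generators of degree at most L - 1: it lies in A_(L-1), where f
  is defined. For v in V^L the element f(dv) is then a cycle of degree L + e > n, hence a boundary;
  choosing preimages along a basis of V^L gives a linear lift l with d l = f d. As A_L is free on the
  generators of degree at most L, the assignment which is f below degree L and l in degree L extends
  to a P-algebra map A_L \<rightarrow> B, and this map commutes with the differentials because it does so on
  generators and both differentials are derivations with the same Koszul signs.
\<close>

lemma palg_vector_space: "is_palg P A \<Longrightarrow> vector_space (asc A)"
  unfolding is_palg_def by auto

lemma palg_Car_subspace: "is_palg P A \<Longrightarrow> lin_subspace (asc A) (Car A m)"
  unfolding is_palg_def by auto

lemma palg_Car_disjoint: "is_palg P A \<Longrightarrow> m \<noteq> m' \<Longrightarrow> x \<in> Car A m \<Longrightarrow> x \<in> Car A m' \<Longrightarrow> x = 0"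
  unfolding is_palg_def by auto

lemma palg_act_Car: "is_palg P A \<Longrightarrow> mu \<in> Pa P n \<Longrightarrow> length xs = n \<Longrightarrow> homog (Car A) ds xs \<Longrightarrow>
   act A mu xs \<in> Car A (sum_list ds)"
  unfolding is_palg_def by auto

lemma palg_act_add_op: "is_palg P A \<Longrightarrow> mu \<in> Pa P n \<Longrightarrow> mu' \<in> Pa P n \<Longrightarrow> length xs = n \<Longrightarrow>
   homog (Car A) ds xs \<Longrightarrow> act A (mu + mu') xs = act A mu xs + act A mu' xs"
  unfolding is_palg_def by auto

lemma palg_act_scale_op: "is_palg P A \<Longrightarrow> mu \<in> Pa P n \<Longrightarrow> length xs = n \<Longrightarrow> homog (Car A) ds xs \<Longrightarrow>
   act A (osc P c mu) xs = asc A c (act A mu xs)"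
  unfolding is_palg_def by auto

lemma palg_act_add_slot: "is_palg P A \<Longrightarrow> mu \<in> Pa P n \<Longrightarrow> length xs = n \<Longrightarrow> homog (Car A) ds xs \<Longrightarrow>
   i < n \<Longrightarrow> x \<in> Car A (ds ! i) \<Longrightarrow> y \<in> Car A (ds ! i) \<Longrightarrow>
   act A mu (xs[i := x + y]) = act A mu (xs[i := x]) + act A mu (xs[i := y])"
  unfolding is_palg_def by auto

lemma palg_act_scale_slot: "is_palg P A \<Longrightarrow> mu \<in> Pa P n \<Longrightarrow> length xs = n \<Longrightarrow> homog (Car A) ds xs \<Longrightarrow>
   i < n \<Longrightarrow> x \<in> Car A (ds ! i) \<Longrightarrow> act A mu (xs[i := asc A c x]) = asc A c (act A mu (xs[i := x]))"
  unfolding is_palg_def by auto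

lemma palg_act_unit: "is_palg P A \<Longrightarrow> x \<in> Car A d \<Longrightarrow> act A (ounit P) [x] = x"
  unfolding is_palg_def by auto

lemma palg_act_ocomp: "is_palg P A \<Longrightarrow> mu \<in> Pa P n \<Longrightarrow> length nus = n \<Longrightarrow> length xss = n \<Longrightarrow>
   (\<forall>i<n. nus ! i \<in> Pa P (length (xss ! i)) \<and> (\<exists>ds. homog (Car A) ds (xss ! i))) \<Longrightarrow>
   act A (ocomp P mu nus) (concat xss) = act A mu (map (\<lambda>i. act A (nus ! i) (xss ! i)) [0..<n])"
  unfolding is_palg_def by auto

lemma palg_act_operm: "is_palg P A \<Longrightarrow> mu \<in> Pa P n \<Longrightarrow> length xs = n \<Longrightarrow> homog (Car A) ds xs \<Longrightarrow>
   r permutes {..<n} \<Longrightarrow> act A (operm P mu r) xs = asc A (koszul r ds) (act A mu (plist r xs))"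
  unfolding is_palg_def by auto

lemma dgpalg_palg: "is_dgpalg P e A \<Longrightarrow> is_palg P A"
  unfolding is_dgpalg_def by auto

lemma dgpalg_dif_add: "is_dgpalg P e A \<Longrightarrow> x \<in> Car A m \<Longrightarrow> y \<in> Car A m \<Longrightarrow>
   dif A (x + y) = dif A x + dif A y"
  unfolding is_dgpalg_def by auto

lemma dgpalg_dif_scale: "is_dgpalg P e A \<Longrightarrow> x \<in> Car A m \<Longrightarrow> dif A (asc A c x) = asc A c (dif A x)"
  unfolding is_dgpalg_def by auto

lemma dgpalg_dif_dif: "is_dgpalg P e A \<Longrightarrow> x \<in> Car A m \<Longrightarrow> dif A (dif A x) = 0"
  unfolding is_dgpalg_def by auto

lemma dgpalg_dif_act: "is_dgpalg P e A \<Longrightarrow> mu \<in> Pa P n \<Longrightarrow> length xs = n \<Longrightarrow> homog (Car A) ds xs \<Longrightarrow>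
   dif A (act A mu xs) =
     (\<Sum>i<n. asc A (ksign (e * sum_list (take i ds))) (act A mu (xs[i := dif A (xs ! i)])))"
  unfolding is_dgpalg_def by auto

lemma operad_unit_Pa: "is_operad P \<Longrightarrow> ounit P \<in> Pa P 1"
  unfolding is_operad_def by auto

lemma operad_ocomp_Pa: "is_operad P \<Longrightarrow> mu \<in> Pa P n \<Longrightarrow> length nus = n \<Longrightarrow> length ks = n \<Longrightarrow>
   (\<forall>i<n. nus ! i \<in> Pa P (ks ! i)) \<Longrightarrow> ocomp P mu nus \<in> Pa P (sum_list ks)"
  unfolding is_operad_def by auto

lemma dg_hom_Car: "dg_hom P A B f \<Longrightarrow> x \<in> Car A m \<Longrightarrow> f x \<in> Car B m"
  unfolding dg_hom_def by auto

lemma dg_hom_add: "dg_hom P A B f \<Longrightarrow> x \<in> Car A m \<Longrightarrow> y \<in> Car A m \<Longrightarrow> f (x + y) = f x + f y"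
  unfolding dg_hom_def by auto

lemma dg_hom_scale: "dg_hom P A B f \<Longrightarrow> x \<in> Car A m \<Longrightarrow> f (asc A c x) = asc B c (f x)"
  unfolding dg_hom_def by auto

lemma dg_hom_dif: "dg_hom P A B f \<Longrightarrow> x \<in> Car A m \<Longrightarrow> f (dif A x) = dif B (f x)"
  unfolding dg_hom_def by auto

lemma dg_hom_act: "dg_hom P A B f \<Longrightarrow> mu \<in> Pa P n \<Longrightarrow> length xs = n \<Longrightarrow> homog (Car A) ds xs \<Longrightarrow>
   f (act A mu xs) = act B mu (map f xs)"
  unfolding dg_hom_def by auto

lemma subalg_simps[simp]:
  "Car (subalg P A V m) = gen_car P A V m" "asc (subalg P A V m) = asc A"
  "dif (subalg P A V m) = dif A" "act (subalg P A V m) = act A"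
  by (simp_all add: subalg_def)

lemma vector_space_imp_module: "vector_space sc \<Longrightarrow> module sc"
  by (simp add: module_iff_vector_space)

lemma homog_length: "homog C ds xs \<Longrightarrow> length ds = length xs"
  unfolding homog_def by simp

lemma homog_nth: "homog C ds xs \<Longrightarrow> i < length xs \<Longrightarrow> xs ! i \<in> C (ds ! i)"
  unfolding homog_def by simp

lemma homog_update: "homog C ds xs \<Longrightarrow> i < length xs \<Longrightarrow> x \<in> C (ds ! i) \<Longrightarrow> homog C ds (xs[i := x])"
  unfolding homog_def by (auto simp: nth_list_update)

lemma homog_update_degree: "homog C ds xs \<Longrightarrow> i < length xs \<Longrightarrow> x \<in> C d \<Longrightarrow>
   homog C (ds[i := d]) (xs[i := x])"
  unfolding homog_def by (auto simp: nth_list_update)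

lemma homog_mono: "homog C ds xs \<Longrightarrow> (\<And>d. C d \<subseteq> C' d) \<Longrightarrow> homog C' ds xs"
  unfolding homog_def by auto

lemma homog_map: "homog C ds xs \<Longrightarrow> (\<And>i. i < length xs \<Longrightarrow> f (xs ! i) \<in> C' (ds ! i)) \<Longrightarrow>
   homog C' ds (map f xs)"
  unfolding homog_def by auto

lemma homog_append: "homog C d1 x1 \<Longrightarrow> homog C d2 x2 \<Longrightarrow> homog C (d1 @ d2) (x1 @ x2)"
  unfolding homog_def by (auto simp: nth_append)

lemma homog_concat: "length dss = length xss \<Longrightarrow> (\<And>i. i < length xss \<Longrightarrow> homog C (dss ! i) (xss ! i)) \<Longrightarrow>
   homog C (concat dss) (concat xss)"
proof (induction xss arbitrary: dss)
  case Nil then show ?case by (simp add: homog_def)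
next
  case (Cons x xss)
  then obtain d dss' where d: "dss = d # dss'" by (cases dss) auto
  have "homog C d x" using Cons.prems(2)[of 0] d by simp
  moreover have "homog C (concat dss') (concat xss)"
  proof (rule Cons.IH)
    show "length dss' = length xss" using Cons.prems(1) d by simp
    show "homog C (dss' ! i) (xss ! i)" if "i < length xss" for i
      using Cons.prems(2)[of "Suc i"] that d by simp
  qed
  ultimately show ?case using d by (simp add: homog_append)
qed

lemma map_snd_zip_apply: "length ds = length xs \<Longrightarrow> map (\<lambda>p. h (snd p)) (zip ds xs) = map h xs"
  by (induction ds xs rule: list_induct2) auto

lemma sum_list_concat: "sum_list (concat xss) = sum_list (map sum_list xss)"
  by (induction xss) auto

lemma sum_list_update_int: "i < length xs \<Longrightarrow> sum_list (xs[i := v]) = sum_list xs - xs ! i + (v :: int)"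
proof (induction xs arbitrary: i)
  case Nil then show ?case by simp
next
  case (Cons a xs) then show ?case by (cases i) auto
qed

lemma lin_subspace_zero: "lin_subspace sc S \<Longrightarrow> 0 \<in> S"
  unfolding lin_subspace_def by auto

lemma lin_subspace_add: "lin_subspace sc S \<Longrightarrow> x \<in> S \<Longrightarrow> y \<in> S \<Longrightarrow> x + y \<in> S"
  unfolding lin_subspace_def by auto

lemma lin_subspace_scale: "lin_subspace sc S \<Longrightarrow> x \<in> S \<Longrightarrow> sc c x \<in> S"
  unfolding lin_subspace_def by auto

lemma lin_subspace_sum: "lin_subspace sc W \<Longrightarrow> (\<And>g. g \<in> S \<Longrightarrow> t g \<in> W) \<Longrightarrow> sum t S \<in> W"
  by (induction S rule: infinite_finite_induct) (auto simp: lin_subspace_zero lin_subspace_add)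

lemma lin_subspace_sum_scale: "lin_subspace sc W \<Longrightarrow> (\<And>g. g \<in> S \<Longrightarrow> t g \<in> W) \<Longrightarrow>
   (\<Sum>g\<in>S. sc (cf g) (t g)) \<in> W"
  by (rule lin_subspace_sum) (auto intro: lin_subspace_scale)

lemma additive_sum_scale:
  fixes F :: "'a::ab_group_add \<Rightarrow> 'b::ab_group_add"
  assumes W: "lin_subspace sc W"
    and add: "\<And>x y. x \<in> W \<Longrightarrow> y \<in> W \<Longrightarrow> F (x + y) = F x + F y"
    and scale: "\<And>c x. x \<in> W \<Longrightarrow> F (sc c x) = sc' c (F x)"
    and tW: "\<And>g. g \<in> S \<Longrightarrow> t g \<in> W"
  shows "F (\<Sum>g\<in>S. sc (cf g) (t g)) = (\<Sum>g\<in>S. sc' (cf g) (F (t g)))"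
  using tW
proof (induction S rule: infinite_finite_induct)
  case (insert x S)
  have "F (\<Sum>g\<in>insert x S. sc (cf g) (t g)) = F (sc (cf x) (t x) + (\<Sum>g\<in>S. sc (cf g) (t g)))"
    using insert by simp
  also have "\<dots> = F (sc (cf x) (t x)) + F (\<Sum>g\<in>S. sc (cf g) (t g))"
    using insert.prems by (intro add lin_subspace_sum_scale[OF W] lin_subspace_scale[OF W]) auto
  also have "\<dots> = (\<Sum>g\<in>insert x S. sc' (cf g) (F (t g)))"
    using insert scale by simp
  finally show ?case .
qed (use add[OF lin_subspace_zero[OF W] lin_subspace_zero[OF W]] in simp_all)

lemma lspan_zero: "0 \<in> lspan sc S"
  unfolding lspan_def by (rule CollectI, rule exI[of _ "[]"], rule exI[of _ "[]"]) simp

lemma lspan_scale_add: "y \<in> S \<Longrightarrow> z \<in> lspan sc S \<Longrightarrow> sc c y + z \<in> lspan sc S"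
proof -
  assume y: "y \<in> S" and z: "z \<in> lspan sc S"
  then obtain cs ys where h: "set ys \<subseteq> S" "length cs = length ys"
    "z = (\<Sum>i<length ys. sc (cs ! i) (ys ! i))"
    unfolding lspan_def by auto
  have "sc c y + z = (\<Sum>i<length (y # ys). sc ((c # cs) ! i) ((y # ys) ! i))"
    using h unfolding length_Cons sum.lessThan_Suc_shift by simp
  then show ?thesis unfolding lspan_def using h y
    by (intro CollectI exI[of _ "c # cs"] exI[of _ "y # ys"]) auto
qed

lemma lspan_induct[consumes 1, case_names zero scale_add]:
  assumes x: "x \<in> lspan sc S" and zero: "Q 0"
    and scale_add: "\<And>c y z. y \<in> S \<Longrightarrow> z \<in> lspan sc S \<Longrightarrow> Q z \<Longrightarrow> Q (sc c y + z)"
  shows "Q x"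
proof -
  obtain cs ys where h: "set ys \<subseteq> S" "length cs = length ys"
    "x = (\<Sum>i<length ys. sc (cs ! i) (ys ! i))"
    using x unfolding lspan_def by auto
  have "set ys \<subseteq> S \<Longrightarrow> length cs = length ys \<Longrightarrow>
     (\<Sum>i<length ys. sc (cs ! i) (ys ! i)) \<in> lspan sc S \<and> Q (\<Sum>i<length ys. sc (cs ! i) (ys ! i))"
  proof (induction ys arbitrary: cs)
    case Nil then show ?case using zero lspan_zero[of sc S] by simp
  next
    case (Cons y ys)
    then obtain c cs' where cs: "cs = c # cs'" by (cases cs) auto
    have "(\<Sum>i<length (y # ys). sc (cs ! i) ((y # ys) ! i)) = sc c y + (\<Sum>i<length ys. sc (cs' ! i) (ys ! i))"
      using cs unfolding length_Cons sum.lessThan_Suc_shift by simp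
    moreover have "(\<Sum>i<length ys. sc (cs' ! i) (ys ! i)) \<in> lspan sc S \<and> Q (\<Sum>i<length ys. sc (cs' ! i) (ys ! i))"
      using Cons cs by auto
    ultimately show ?case using Cons.prems(1) by (auto intro: scale_add lspan_scale_add)
  qed
  then show ?thesis using h by auto
qed

lemma lspan_subset_subspace: "lin_subspace sc W \<Longrightarrow> S \<subseteq> W \<Longrightarrow> x \<in> lspan sc S \<Longrightarrow> x \<in> W"
  by (erule lspan_induct) (auto simp: lin_subspace_def)

lemma lspan_superset: "vector_space sc \<Longrightarrow> y \<in> S \<Longrightarrow> y \<in> lspan sc S"
  using lspan_scale_add[of y S 0 sc 1] lspan_zero[of sc S]
  by (simp add: module.scale_one[OF vector_space_imp_module])

lemma lspan_add:
  assumes "vector_space sc" "x \<in> lspan sc S" "z \<in> lspan sc S" shows "x + z \<in> lspan sc S"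
  using assms(2) by (induction rule: lspan_induct) (auto simp: add.assoc assms(3) intro: lspan_scale_add)

lemma lspan_scale:
  assumes vs: "vector_space sc" and x: "x \<in> lspan sc S" shows "sc a x \<in> lspan sc S"
  using x
proof (induction rule: lspan_induct)
  case zero show ?case
    using lspan_zero module.scale_zero_right[OF vector_space_imp_module[OF vs]] by metis
next
  case (scale_add c y z) then show ?case
    by (simp add: module.scale_right_distrib[OF vector_space_imp_module[OF vs]]
        module.scale_scale[OF vector_space_imp_module[OF vs]] lspan_scale_add)
qed

lemma lspan_subspace: "vector_space sc \<Longrightarrow> lin_subspace sc (lspan sc S)"
  unfolding lin_subspace_def using lspan_zero lspan_add lspan_scale by blast

lemma palg_act_zero_slot:
  assumes A: "is_palg P A" and mu: "mu \<in> Pa P n" and l: "length xs = n"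
    and h: "homog (Car A) ds xs" and i: "i < n" and z: "xs ! i = 0"
  shows "act A mu xs = 0"
proof -
  interpret module "asc A" using vector_space_imp_module[OF palg_vector_space[OF A]] .
  have "act A mu (xs[i := asc A 0 0]) = asc A 0 (act A mu (xs[i := 0]))"
    by (rule palg_act_scale_slot[OF A mu l h i lin_subspace_zero[OF palg_Car_subspace[OF A]]])
  then show ?thesis using z by (metis list_update_id scale_zero_left)
qed

section \<open>Evaluation of formal combinations of generators\<close>

text \<open>A formal combination is a finitely supported coefficient function on free_gens. Quasi-freeness
  says that a homogeneous combination whose evaluation in A is 0 lies in rspan (free_rels P A V);
  by eval_rspan every admissible assignment of the generators also kills these combinations, which
  is the universal property of the free P-algebra.\<close>

definition eval_gen :: "('k, 'c, 'o) dgpalg \<Rightarrow> ('a \<Rightarrow> 'c) \<Rightarrow> ('o \<times> (int \<times> 'a) list) \<Rightarrow> 'c" where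
  "eval_gen C hh g = act C (fst g) (map (\<lambda>p. hh (snd p)) (snd g))"

definition eval_comb :: "('k::field, 'c::ab_group_add, 'o) dgpalg \<Rightarrow> ('a \<Rightarrow> 'c)
     \<Rightarrow> (('o \<times> (int \<times> 'a) list) \<Rightarrow> 'k) \<Rightarrow> 'c" where
  "eval_comb C hh s = (\<Sum>g\<in>{g. s g \<noteq> 0}. asc C (s g) (eval_gen C hh g))"

lemma eval_comb_zero: "eval_comb C hh (\<lambda>_. 0) = 0"
  unfolding eval_comb_def by simp

lemma finite_support_lincomb:
  "finite {g. sa g \<noteq> 0} \<Longrightarrow> finite {g. sb g \<noteq> 0} \<Longrightarrow> finite {g. (a::'k::field) * sa g + b * sb g \<noteq> 0}"
  by (rule finite_subset[of _ "{g. sa g \<noteq> 0} \<union> {g. sb g \<noteq> 0}"]) auto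

lemma finite_support_dlt: "finite {g. (dlt a g :: 'k::field) \<noteq> 0}"
  by (rule finite_subset[of _ "{a}"]) (auto simp: dlt_def)

lemma finite_support_dlt2: "finite {g. (dlt a g - k * dlt b g :: 'k::field) \<noteq> 0}"
  by (rule finite_subset[of _ "{a, b}"]) (auto simp: dlt_def)

lemma finite_support_dlt3: "finite {g. (dlt a g - dlt b g - dlt c g :: 'k::field) \<noteq> 0}"
  by (rule finite_subset[of _ "{a, b, c}"]) (auto simp: dlt_def)

lemma eval_comb_superset:
  assumes "vector_space (asc C)" "finite S" "{g. s g \<noteq> 0} \<subseteq> S"
  shows "eval_comb C hh s = (\<Sum>g\<in>S. asc C (s g) (eval_gen C hh g))"
proof -
  interpret module "asc C" using vector_space_imp_module[OF assms(1)] .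
  show ?thesis unfolding eval_comb_def by (rule sum.mono_neutral_left) (use assms in auto)
qed

lemma eval_comb_lincomb:
  assumes vs: "vector_space (asc C)" and fa: "finite {g. sa g \<noteq> 0}" and fb: "finite {g. sb g \<noteq> 0}"
  shows "eval_comb C hh (\<lambda>g. a * sa g + b * sb g) = asc C a (eval_comb C hh sa) + asc C b (eval_comb C hh sb)"
proof -
  interpret module "asc C" using vector_space_imp_module[OF vs] .
  let ?S = "{g. sa g \<noteq> 0} \<union> {g. sb g \<noteq> 0}"
  have S: "finite ?S" using fa fb by simp
  have "eval_comb C hh (\<lambda>g. a * sa g + b * sb g) = (\<Sum>g\<in>?S. asc C (a * sa g + b * sb g) (eval_gen C hh g))"
    by (rule eval_comb_superset[OF vs S]) auto
  moreover have "eval_comb C hh sa = (\<Sum>g\<in>?S. asc C (sa g) (eval_gen C hh g))"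
    by (rule eval_comb_superset[OF vs S]) auto
  moreover have "eval_comb C hh sb = (\<Sum>g\<in>?S. asc C (sb g) (eval_gen C hh g))"
    by (rule eval_comb_superset[OF vs S]) auto
  ultimately show ?thesis
    by (simp add: scale_left_distrib scale_sum_right sum.distrib)
qed

lemma eval_comb_dlt:
  assumes vs: "vector_space (asc C)" shows "eval_comb C hh (dlt a) = eval_gen C hh a"
proof -
  interpret module "asc C" using vector_space_imp_module[OF vs] .
  have "eval_comb C hh (dlt a) = (\<Sum>g\<in>{a}. asc C (dlt a g) (eval_gen C hh g))"
    by (rule eval_comb_superset[OF vs]) (auto simp: dlt_def)
  then show ?thesis by (simp add: dlt_def)
qed

lemma eval_comb_dlt2:
  assumes vs: "vector_space (asc C)"
  shows "eval_comb C hh (\<lambda>g. dlt a g - k * dlt b g) = eval_gen C hh a - asc C k (eval_gen C hh b)"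
proof -
  interpret module "asc C" using vector_space_imp_module[OF vs] .
  have eq: "(\<lambda>g. dlt a g - k * dlt b g) = (\<lambda>g. 1 * dlt a g + (- k) * dlt b g)" by simp
  show ?thesis
    unfolding eq eval_comb_lincomb[OF vs finite_support_dlt finite_support_dlt] by (simp add: eval_comb_dlt[OF vs])
qed

lemma eval_comb_dlt3:
  assumes vs: "vector_space (asc C)"
  shows "eval_comb C hh (\<lambda>g. dlt a g - dlt b g - dlt c g) = eval_gen C hh a - eval_gen C hh b - eval_gen C hh c"
proof -
  interpret module "asc C" using vector_space_imp_module[OF vs] .
  have eq: "(\<lambda>g. dlt a g - dlt b g - dlt c g) = (\<lambda>g. 1 * dlt a g + (- 1) * (1 * dlt b g + 1 * dlt c g))"
    by (simp add: fun_eq_iff algebra_simps)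
  show ?thesis
    unfolding eq
      eval_comb_lincomb[OF vs finite_support_dlt finite_support_lincomb[OF finite_support_dlt finite_support_dlt]]
      eval_comb_lincomb[OF vs finite_support_dlt finite_support_dlt]
    by (simp add: eval_comb_dlt[OF vs] scale_right_distrib)
qed

lemma free_gens_iff:
  "(mu, dxs) \<in> free_gens P V \<longleftrightarrow> mu \<in> Pa P (length dxs) \<and> (\<forall>p\<in>set dxs. snd p \<in> V (fst p))"
  unfolding free_gens_def by auto

lemma map_plist: "r permutes {..<length xs} \<Longrightarrow> map f (plist r xs) = plist r (map f xs)"
  unfolding plist_def using permutes_in_image by fastforce

locale gen_assignment =
  fixes P :: "('k::field, 'o::ab_group_add) operad" and A :: "('k, 'a::ab_group_add, 'o) dgpalg"
    and V :: "int \<Rightarrow> 'a set" and C :: "('k, 'c::ab_group_add, 'o) dgpalg" and hh :: "'a \<Rightarrow> 'c"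
  assumes C: "is_palg P C"
    and hh_Car: "\<And>d x. x \<in> V d \<Longrightarrow> hh x \<in> Car C d"
    and hh_add: "\<And>d x y. x \<in> V d \<Longrightarrow> y \<in> V d \<Longrightarrow> hh (x + y) = hh x + hh y"
    and hh_scale: "\<And>d c x. x \<in> V d \<Longrightarrow> hh (asc A c x) = asc C c (hh x)"
begin

lemma C_vector_space: "vector_space (asc C)"
  using palg_vector_space[OF C] .

lemma homog_gen_image:
  "(mu, dxs) \<in> free_gens P V \<Longrightarrow> homog (Car C) (map fst dxs) (map (\<lambda>p. hh (snd p)) dxs)"
  unfolding homog_def free_gens_iff by (auto intro!: hh_Car)

lemma map_update_gen:
  "i < length dxs \<Longrightarrow> map (\<lambda>p. hh (snd p)) (dxs[i := (d, x)]) = (map (\<lambda>p. hh (snd p)) dxs)[i := hh x]"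
  by (simp add: map_update)

lemma eval_rel_add_op: "(mu, dxs) \<in> free_gens P V \<Longrightarrow> (mu', dxs) \<in> free_gens P V \<Longrightarrow>
   finite {g. (\<lambda>h. dlt (mu + mu', dxs) h - dlt (mu, dxs) h - dlt (mu', dxs) h) g \<noteq> 0} \<and>
   eval_comb C hh (\<lambda>h. dlt (mu + mu', dxs) h - dlt (mu, dxs) h - dlt (mu', dxs) h) = 0"
proof -
  assume g: "(mu, dxs) \<in> free_gens P V" and g': "(mu', dxs) \<in> free_gens P V"
  have "act C (mu + mu') (map (\<lambda>p. hh (snd p)) dxs)
      = act C mu (map (\<lambda>p. hh (snd p)) dxs) + act C mu' (map (\<lambda>p. hh (snd p)) dxs)"
    by (rule palg_act_add_op[OF C _ _ _ homog_gen_image[OF g]]) (use g g' in \<open>auto simp: free_gens_iff\<close>)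
  then show ?thesis
    by (intro conjI finite_support_dlt3) (simp add: eval_comb_dlt3[OF C_vector_space] eval_gen_def)
qed

lemma eval_rel_scale_op: "(mu, dxs) \<in> free_gens P V \<Longrightarrow>
   finite {g. (\<lambda>h. dlt (osc P c mu, dxs) h - c * dlt (mu, dxs) h) g \<noteq> 0} \<and>
   eval_comb C hh (\<lambda>h. dlt (osc P c mu, dxs) h - c * dlt (mu, dxs) h) = 0"
proof -
  assume g: "(mu, dxs) \<in> free_gens P V"
  have "act C (osc P c mu) (map (\<lambda>p. hh (snd p)) dxs) = asc C c (act C mu (map (\<lambda>p. hh (snd p)) dxs))"
    by (rule palg_act_scale_op[OF C _ _ homog_gen_image[OF g]]) (use g in \<open>auto simp: free_gens_iff\<close>)
  then show ?thesis by (intro conjI finite_support_dlt2) (simp add: eval_comb_dlt2[OF C_vector_space] eval_gen_def)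
qed

lemma eval_rel_add_slot: "(mu, dxs) \<in> free_gens P V \<Longrightarrow> i < length dxs \<Longrightarrow> x \<in> V d \<Longrightarrow> y \<in> V d \<Longrightarrow>
   finite {g. (\<lambda>h. dlt (mu, dxs[i := (d, x + y)]) h - dlt (mu, dxs[i := (d, x)]) h - dlt (mu, dxs[i := (d, y)]) h) g \<noteq> 0} \<and>
   eval_comb C hh (\<lambda>h. dlt (mu, dxs[i := (d, x + y)]) h - dlt (mu, dxs[i := (d, x)]) h - dlt (mu, dxs[i := (d, y)]) h) = 0"
proof -
  assume g: "(mu, dxs) \<in> free_gens P V" and i: "i < length dxs" and x: "x \<in> V d" and y: "y \<in> V d"
  let ?xs = "map (\<lambda>p. hh (snd p)) dxs"
  have H: "homog (Car C) ((map fst dxs)[i := d]) (?xs[i := hh x])"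
    using homog_update_degree[OF homog_gen_image[OF g], of i "hh x" d] i hh_Car[OF x] by simp
  have "act C mu ((?xs[i := hh x])[i := hh x + hh y])
      = act C mu ((?xs[i := hh x])[i := hh x]) + act C mu ((?xs[i := hh x])[i := hh y])"
    by (rule palg_act_add_slot[OF C _ _ H]) (use g i hh_Car[OF x] hh_Car[OF y] in \<open>auto simp: free_gens_iff\<close>)
  then show ?thesis using i
    by (intro conjI finite_support_dlt3)
      (simp add: eval_comb_dlt3[OF C_vector_space] eval_gen_def map_update_gen hh_add[OF x y])
qed

lemma eval_rel_scale_slot: "(mu, dxs) \<in> free_gens P V \<Longrightarrow> i < length dxs \<Longrightarrow> x \<in> V d \<Longrightarrow>
   finite {g. (\<lambda>h. dlt (mu, dxs[i := (d, asc A c x)]) h - c * dlt (mu, dxs[i := (d, x)]) h) g \<noteq> 0} \<and>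
   eval_comb C hh (\<lambda>h. dlt (mu, dxs[i := (d, asc A c x)]) h - c * dlt (mu, dxs[i := (d, x)]) h) = 0"
proof -
  assume g: "(mu, dxs) \<in> free_gens P V" and i: "i < length dxs" and x: "x \<in> V d"
  let ?xs = "map (\<lambda>p. hh (snd p)) dxs"
  have H: "homog (Car C) ((map fst dxs)[i := d]) (?xs[i := hh x])"
    using homog_update_degree[OF homog_gen_image[OF g], of i "hh x" d] i hh_Car[OF x] by simp
  have "act C mu ((?xs[i := hh x])[i := asc C c (hh x)]) = asc C c (act C mu ((?xs[i := hh x])[i := hh x]))"
    by (rule palg_act_scale_slot[OF C _ _ H]) (use g i hh_Car[OF x] in \<open>auto simp: free_gens_iff\<close>)
  then show ?thesis using i
    by (intro conjI finite_support_dlt2)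
      (simp add: eval_comb_dlt2[OF C_vector_space] eval_gen_def map_update_gen hh_scale[OF x])
qed

lemma eval_rel_operm: "(mu, dxs) \<in> free_gens P V \<Longrightarrow> r permutes {..<length dxs} \<Longrightarrow>
   finite {g. (\<lambda>h. dlt (operm P mu r, dxs) h - koszul r (map fst dxs) * dlt (mu, plist r dxs) h) g \<noteq> 0} \<and>
   eval_comb C hh (\<lambda>h. dlt (operm P mu r, dxs) h - koszul r (map fst dxs) * dlt (mu, plist r dxs) h) = 0"
proof -
  assume g: "(mu, dxs) \<in> free_gens P V" and r: "r permutes {..<length dxs}"
  have "act C (operm P mu r) (map (\<lambda>p. hh (snd p)) dxs) =
     asc C (koszul r (map fst dxs)) (act C mu (plist r (map (\<lambda>p. hh (snd p)) dxs)))"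
    by (rule palg_act_operm[OF C _ _ homog_gen_image[OF g]]) (use g r in \<open>auto simp: free_gens_iff\<close>)
  then show ?thesis
    by (intro conjI finite_support_dlt2) (simp add: eval_comb_dlt2[OF C_vector_space] eval_gen_def map_plist[OF r])
qed

lemma eval_free_rel: "rr \<in> free_rels P A V \<Longrightarrow> finite {g. rr g \<noteq> 0} \<and> eval_comb C hh rr = 0"
  unfolding free_rels_def
  by (elim UnE CollectE exE conjE; hypsubst;
      rule eval_rel_add_op eval_rel_scale_op eval_rel_add_slot eval_rel_scale_slot eval_rel_operm;
      assumption)

lemma eval_rspan: "s \<in> rspan (free_rels P A V) \<Longrightarrow> finite {g. s g \<noteq> 0} \<and> eval_comb C hh s = 0"
proof (induction rule: rspan.induct)
  case rspan_zero then show ?case by (simp add: eval_comb_def)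
next
  case (rspan_step r s c)
  interpret module "asc C" using vector_space_imp_module[OF C_vector_space] .
  have r: "finite {g. r g \<noteq> 0}" "eval_comb C hh r = 0" using eval_free_rel[OF rspan_step(1)] by auto
  have "(\<lambda>g. c * r g + s g) = (\<lambda>g. c * r g + 1 * s g)" by simp
  then show ?case
    using r rspan_step(3) finite_support_lincomb[of r s c 1] eval_comb_lincomb[OF C_vector_space r(1), of s hh c 1]
    by simp
qed

end

section \<open>Generators of 1-connected quasi-free algebras\<close>

lemma quasi_free_gen_subspace: "quasi_free P A V \<Longrightarrow> lin_subspace (asc A) (V d)"
  unfolding quasi_free_def by auto

lemma quasi_free_gen_Car: "quasi_free P A V \<Longrightarrow> x \<in> V d \<Longrightarrow> x \<in> Car A d"
  unfolding quasi_free_def by auto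

lemma quasi_free_eval_inj:
  fixes P :: "('k::field, 'o::ab_group_add) operad" and A :: "('k, 'a::ab_group_add, 'o) dgpalg"
    and s :: "('o \<times> (int \<times> 'a) list) \<Rightarrow> 'k"
  assumes qf: "quasi_free P A V" and fin: "finite {g. s g \<noteq> 0}"
    and supp: "\<And>g. s g \<noteq> 0 \<Longrightarrow> g \<in> free_gens P V \<and> sum_list (map fst (snd g)) = j"
    and eval: "eval_comb A (\<lambda>x. x) s = 0"
  shows "s \<in> rspan (free_rels P A V)"
proof -
  have "(\<Sum>g\<in>{g. s g \<noteq> 0}. asc A (s g) (act A (fst g) (map snd (snd g)))) = 0"
    using eval unfolding eval_comb_def eval_gen_def by simp
  then show ?thesis
    using qf fin supp unfolding quasi_free_def by blast
qed

lemma gen_assignment_kill_deg0: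
  assumes A: "is_palg P A" and qf: "quasi_free P A V"
  shows "gen_assignment P A V A (\<lambda>y. if y \<in> V 0 then 0 else y)"
proof -
  interpret module "asc A" using vector_space_imp_module[OF palg_vector_space[OF A]] .
  have eq: "(if y \<in> V 0 then 0 else y) = (if d = 0 then 0 else y)" if y: "y \<in> V d" for y d
    using y palg_Car_disjoint[OF A _ quasi_free_gen_Car[OF qf y] quasi_free_gen_Car[OF qf]] by auto
  show ?thesis
  proof
    show "is_palg P A" by (rule A)
    show "(if x \<in> V 0 then 0 else x) \<in> Car A d" if "x \<in> V d" for x d
      using eq[OF that] quasi_free_gen_Car[OF qf that] lin_subspace_zero[OF palg_Car_subspace[OF A]] by simp
    show "(if x + y \<in> V 0 then 0 else x + y) = (if x \<in> V 0 then 0 else x) + (if y \<in> V 0 then 0 else y)"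
      if "x \<in> V d" "y \<in> V d" for x y d
      using eq[OF that(1)] eq[OF that(2)] eq[OF lin_subspace_add[OF quasi_free_gen_subspace[OF qf] that]] by simp
    show "(if asc A c x \<in> V 0 then 0 else asc A c x) = asc A c (if x \<in> V 0 then 0 else x)"
      if "x \<in> V d" for x d c
      using eq[OF that] eq[OF lin_subspace_scale[OF quasi_free_gen_subspace[OF qf] that]] by simp
  qed
qed

text \<open>A generator x of degree 0 equals u() for some u in P(0), so the formal difference
  unit(x) - u() evaluates to 0 and lies in the relations. Evaluating it under the assignment
  that kills V^0 gives 0 - u() = 0, hence x = u() = 0.\<close>

lemma quasi_free_deg0_gen_zero:
  fixes P :: "('k::field, 'o::ab_group_add) operad" and A :: "('k, 'a::ab_group_add, 'o) dgpalg"
  assumes op: "is_operad P" and A: "is_palg P A" and qf: "quasi_free P A V" and d0: "deg0_is_P0 P A"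
    and x: "x \<in> V 0"
  shows "x = 0"
proof -
  interpret module "asc A" using vector_space_imp_module[OF palg_vector_space[OF A]] .
  have vs: "vector_space (asc A)" using palg_vector_space[OF A] .
  obtain u where u: "u \<in> Pa P 0" and xu: "x = act A u []"
    using d0 quasi_free_gen_Car[OF qf x] unfolding deg0_is_P0_def by auto
  define a where "a = (ounit P, [(0::int, x)])"
  define b where "b = (u, [] :: (int \<times> 'a) list)"
  define s :: "'o \<times> (int \<times> 'a) list \<Rightarrow> 'k" where "s = (\<lambda>g. dlt a g - 1 * dlt b g)"
  have ab: "a \<in> free_gens P V" "b \<in> free_gens P V"
    unfolding a_def b_def free_gens_iff using operad_unit_Pa[OF op] x u by simp_all
  have unit_x: "act A (ounit P) [x] = x"
    using palg_act_unit[OF A quasi_free_gen_Car[OF qf x]] .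
  have "s \<in> rspan (free_rels P A V)"
  proof (rule quasi_free_eval_inj[OF qf, where j=0])
    show "finite {g. s g \<noteq> 0}" unfolding s_def by (rule finite_support_dlt2)
    show "g \<in> free_gens P V \<and> sum_list (map fst (snd g)) = 0" if "s g \<noteq> 0" for g
      using that ab unfolding s_def dlt_def by (auto split: if_splits simp: a_def b_def)
    show "eval_comb A (\<lambda>x. x) s = 0"
      unfolding s_def eval_comb_dlt2[OF vs] using unit_x xu by (simp add: eval_gen_def a_def b_def)
  qed
  then have "eval_comb A (\<lambda>y. if y \<in> V 0 then 0 else y) s = 0"
    using gen_assignment.eval_rspan[OF gen_assignment_kill_deg0[OF A qf]] by blast
  then show "x = 0"
    unfolding s_def eval_comb_dlt2[OF vs]
    using x xu palg_act_unit[OF A lin_subspace_zero[OF palg_Car_subspace[OF A]]]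
    by (simp add: eval_gen_def a_def b_def)
qed

lemma cochain_gen_degree_ge_2:
  assumes op: "is_operad P" and A: "is_palg P A" and qf: "quasi_free P A V"
    and oc: "one_connected_cochain P A" and x: "x \<in> V d" and nz: "x \<noteq> 0"
  shows "2 \<le> d"
proof (rule ccontr)
  assume "\<not> 2 \<le> d"
  then consider "d < 0" | "d = 0" | "d = 1" by linarith
  then show False
    using quasi_free_deg0_gen_zero[OF op A qf] oc quasi_free_gen_Car[OF qf x] x nz
    unfolding one_connected_cochain_def by cases auto
qed

lemma chain_gen_degree_ge_1:
  assumes op: "is_operad P" and A: "is_palg P A" and qf: "quasi_free P A V"
    and oc: "one_connected_chain P A" and x: "x \<in> V d" and nz: "x \<noteq> 0"
  shows "1 \<le> d"
proof (rule ccontr)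
  assume "\<not> 1 \<le> d"
  then consider "d < 0" | "d = 0" by linarith
  then show False
    using quasi_free_deg0_gen_zero[OF op A qf] oc quasi_free_gen_Car[OF qf x] x nz
    unfolding one_connected_chain_def by cases auto
qed

section \<open>Extending a map over the generators of one degree\<close>

lemma nth_le_sum_list_minus_bound:
  fixes ds :: "int list"
  assumes len: "2 \<le> length ds" and ge: "\<And>t. t < length ds \<Longrightarrow> b \<le> ds ! t" and b: "0 \<le> b"
    and i: "i < length ds"
  shows "ds ! i \<le> sum_list ds - b"
proof -
  define j where "j = (if i = 0 then 1 else 0::nat)"
  have j: "j \<noteq> i" "j < length ds" using len i unfolding j_def by auto
  have "ds ! i + ds ! j = (\<Sum>t\<in>{i, j}. ds ! t)" using j by simp
  also have "\<dots> \<le> (\<Sum>t\<in>{..<length ds}. ds ! t)"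
    by (rule sum_mono2) (use i j ge b in \<open>auto intro: order_trans\<close>)
  also have "\<dots> = sum_list ds" by (simp add: sum_list_sum_nth atLeast0LessThan)
  finally show ?thesis using ge[OF j(2)] by linarith
qed

lemma linear_lift_exists:
  fixes D :: "'b::ab_group_add \<Rightarrow> 'c::ab_group_add" and F :: "'a::ab_group_add \<Rightarrow> 'c"
  assumes vs: "vector_space sA" "vector_space sB"
    and W: "lin_subspace sA W" and S: "lin_subspace sB S"
    and D_add: "\<And>x y. x \<in> S \<Longrightarrow> y \<in> S \<Longrightarrow> D (x + y) = D x + D y"
    and D_scale: "\<And>c x. x \<in> S \<Longrightarrow> D (sB c x) = sC c (D x)"
    and F_add: "\<And>x y. x \<in> W \<Longrightarrow> y \<in> W \<Longrightarrow> F (x + y) = F x + F y"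
    and F_scale: "\<And>c x. x \<in> W \<Longrightarrow> F (sA c x) = sC c (F x)"
    and preimage: "\<And>v. v \<in> W \<Longrightarrow> \<exists>b\<in>S. D b = F v"
  shows "\<exists>l. Vector_Spaces.linear sA sB l \<and> (\<forall>v\<in>W. l v \<in> S \<and> D (l v) = F v)"
proof -
  interpret VA: vector_space sA by (rule vs(1))
  interpret VP: vector_space_pair sA sB by (rule vector_space_pair.intro[OF vs])
  obtain bb where bb: "\<And>v. v \<in> W \<Longrightarrow> bb v \<in> S \<and> D (bb v) = F v"
    using preimage by metis
  obtain Bs where Bs: "Bs \<subseteq> W" "VA.independent Bs" "W \<subseteq> VA.span Bs"
    using VA.basis_exists[of W] by metis
  define l where "l = VP.construct Bs bb"
  have lin: "Vector_Spaces.linear sA sB l"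
    unfolding l_def by (rule VP.linear_construct[OF Bs(2)])
  have D0: "D 0 = 0" and F0: "F 0 = 0"
    using D_add[OF lin_subspace_zero[OF S] lin_subspace_zero[OF S]]
      F_add[OF lin_subspace_zero[OF W] lin_subspace_zero[OF W]] by simp_all
  have "v \<in> W \<and> l v \<in> S \<and> D (l v) = F v" if "v \<in> VA.span Bs" for v
    using that
  proof (induction rule: VA.span_induct_alt)
    case base
    then show ?case
      using lin_subspace_zero[OF W] lin_subspace_zero[OF S] VP.linear_0[OF lin] D0 F0 by simp
  next
    case (step c x y)
    have x: "x \<in> W" "bb x \<in> S" "D (bb x) = F x" using step(1) Bs(1) bb by auto
    have cx: "sA c x \<in> W" "sB c (bb x) \<in> S"
      using lin_subspace_scale[OF W x(1)] lin_subspace_scale[OF S x(2)] by auto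
    have "l (sA c x + y) = sB c (bb x) + l y"
      using VP.linear_add[OF lin] VP.linear_scale[OF lin] VP.construct_basis[OF Bs(2) step(1)]
      unfolding l_def by simp
    then show ?case
      using step(2) x cx lin_subspace_add[OF W cx(1)] lin_subspace_add[OF S cx(2)]
        D_add[OF cx(2)] D_scale[OF x(2)] F_add[OF cx(1)] F_scale[OF x(1)] by simp
  qed
  then show ?thesis using lin Bs(3) by blast
qed

definition monomial :: "('k, 'o) operad \<Rightarrow> ('k, 'a, 'o) dgpalg \<Rightarrow> (int \<Rightarrow> 'a set) \<Rightarrow> int \<Rightarrow> int \<Rightarrow> 'a \<Rightarrow> bool" where
  "monomial P A V m j x \<longleftrightarrow> (\<exists>mu n ds xs. mu \<in> Pa P n \<and> length xs = n \<and> homog V ds xs \<and>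
      (\<forall>d\<in>set ds. d \<le> m) \<and> sum_list ds = j \<and> x = act A mu xs)"

lemma gen_car_eq: "gen_car P A V m j = lspan (asc A) (Collect (monomial P A V m j))"
  unfolding gen_car_def monomial_def by (rule arg_cong[where f="lspan (asc A)"]) auto

text \<open>L is the degree of the generators to be added and e the degree of the differential. The only
  consequence of 1-connectedness that is used is the lower bound bnd on the degrees of the nonzero
  generators; it makes the differential of a generator of degree at most L land in A_(L-1).\<close>

locale extension_setting =
  fixes P :: "('k::field, 'o::ab_group_add) operad" and A :: "('k, 'a::ab_group_add, 'o) dgpalg"
    and V :: "int \<Rightarrow> 'a set" and B :: "('k, 'b::ab_group_add, 'o) dgpalg"
    and e bnd L n :: int and f :: "'a \<Rightarrow> 'b"
  assumes P_operad: "is_operad P" and A_dg: "is_dgpalg P e A" and B_dg: "is_dgpalg P e B"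
    and A_qf: "quasi_free P A V" and A_minimal: "minimal P e A V"
    and gen_degree_ge: "\<And>d x. x \<in> V d \<Longrightarrow> x \<noteq> 0 \<Longrightarrow> bnd \<le> d"
    and degree_bound_nonneg: "0 \<le> bnd" and degree_bound_ge: "e + 1 \<le> bnd"
    and B_homology: "homology_le e B n" and L_gt_n: "n < L + e"
    and f_hom: "dg_hom P (subalg P A V (L - 1)) B f"
begin

abbreviation G where "G m j \<equiv> gen_car P A V m j"

lemma A_palg: "is_palg P A" using dgpalg_palg[OF A_dg] .
lemma B_palg: "is_palg P B" using dgpalg_palg[OF B_dg] .
lemma A_vector_space: "vector_space (asc A)" using palg_vector_space[OF A_palg] .
lemma B_vector_space: "vector_space (asc B)" using palg_vector_space[OF B_palg] .
lemmas A_module = vector_space_imp_module[OF A_vector_space]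
lemmas B_module = vector_space_imp_module[OF B_vector_space]

lemma gen_Car: "x \<in> V d \<Longrightarrow> x \<in> Car A d" using quasi_free_gen_Car[OF A_qf] .
lemma A_Car_subspace: "lin_subspace (asc A) (Car A m)" using palg_Car_subspace[OF A_palg] .
lemma B_Car_subspace: "lin_subspace (asc B) (Car B m)" using palg_Car_subspace[OF B_palg] .
lemma gen_subspace: "lin_subspace (asc A) (V d)" using quasi_free_gen_subspace[OF A_qf] .
lemma gen_car_subspace: "lin_subspace (asc A) (G m j)"
  unfolding gen_car_def by (rule lspan_subspace[OF A_vector_space])

lemma gen_disjoint: "x \<in> V d \<Longrightarrow> x \<in> V d' \<Longrightarrow> d \<noteq> d' \<Longrightarrow> x = 0"
  using palg_Car_disjoint[OF A_palg _ gen_Car gen_Car] by blast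

lemma monomial_gen_car: "monomial P A V m j x \<Longrightarrow> x \<in> G m j"
  unfolding gen_car_eq by (rule lspan_superset[OF A_vector_space]) simp

lemma monomial_Car: "monomial P A V m j x \<Longrightarrow> x \<in> Car A j"
proof -
  assume "monomial P A V m j x"
  then obtain mu k ds xs where h: "mu \<in> Pa P k" "length xs = k" "homog V ds xs" "sum_list ds = j"
    "x = act A mu xs"
    unfolding monomial_def by blast
  have "homog (Car A) ds xs" by (rule homog_mono[OF h(3)]) (use gen_Car in blast)
  then have "act A mu xs \<in> Car A (sum_list ds)" by (rule palg_act_Car[OF A_palg h(1) h(2)])
  then show ?thesis using h(4,5) by simp
qed

lemma gen_car_Car: "x \<in> G m j \<Longrightarrow> x \<in> Car A j"
  unfolding gen_car_eq by (erule lspan_subset_subspace[OF A_Car_subspace, rotated]) (auto intro: monomial_Car)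

lemma gen_car_mono: "m' \<le> m \<Longrightarrow> x \<in> G m' j \<Longrightarrow> x \<in> G m j"
proof -
  assume mm: "m' \<le> m" and x: "x \<in> G m' j"
  have "Collect (monomial P A V m' j) \<subseteq> G m j"
    using mm by (auto simp: monomial_def intro!: monomial_gen_car) fastforce
  then show ?thesis using x unfolding gen_car_eq[of P A V m'] by (rule lspan_subset_subspace[OF gen_car_subspace])
qed

lemma gen_monomial: "x \<in> V d \<Longrightarrow> d \<le> m \<Longrightarrow> monomial P A V m d x"
  unfolding monomial_def
  using operad_unit_Pa[OF P_operad] palg_act_unit[OF A_palg gen_Car]
  by (intro exI[of _ "ounit P"] exI[of _ 1] exI[of _ "[d]"] exI[of _ "[x]"]) (simp add: homog_def)

lemma gen_gen_car: "x \<in> V d \<Longrightarrow> d \<le> m \<Longrightarrow> x \<in> G m d"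
  using monomial_gen_car gen_monomial by blast

lemma dif_A_zero: "dif A 0 = 0"
  using dgpalg_dif_add[OF A_dg lin_subspace_zero[OF A_Car_subspace] lin_subspace_zero[OF A_Car_subspace]] by simp

lemma dif_B_zero: "dif B 0 = 0"
  using dgpalg_dif_add[OF B_dg lin_subspace_zero[OF B_Car_subspace] lin_subspace_zero[OF B_Car_subspace]] by simp

lemma f_Car: "x \<in> G (L - 1) m \<Longrightarrow> f x \<in> Car B m"
  using dg_hom_Car[OF f_hom] by simp

lemma f_add: "x \<in> G (L - 1) m \<Longrightarrow> y \<in> G (L - 1) m \<Longrightarrow> f (x + y) = f x + f y"
  using dg_hom_add[OF f_hom] by simp

lemma f_scale: "x \<in> G (L - 1) m \<Longrightarrow> f (asc A c x) = asc B c (f x)"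
  using dg_hom_scale[OF f_hom] by fastforce

lemma f_dif: "x \<in> G (L - 1) m \<Longrightarrow> f (dif A x) = dif B (f x)"
  using dg_hom_dif[OF f_hom] by fastforce

lemma f_act: "mu \<in> Pa P k \<Longrightarrow> length xs = k \<Longrightarrow> homog (G (L - 1)) ds xs \<Longrightarrow>
   f (act A mu xs) = act B mu (map f xs)"
  using dg_hom_act[OF f_hom] by fastforce

lemma f_zero: "f 0 = 0"
  using f_add[OF lin_subspace_zero[OF gen_car_subspace] lin_subspace_zero[OF gen_car_subspace]] by simp

lemma decomposable_monomial_lower:
  assumes k: "2 \<le> k" and mu: "mu \<in> Pa P k" and l: "length xs = k" and h: "homog V ds xs"
    and sum: "sum_list ds \<le> L + e"
  shows "act A mu xs \<in> G (L - 1) (sum_list ds)"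
proof (cases "\<exists>i<k. xs ! i = 0")
  case True
  then obtain i where "i < k" "xs ! i = 0" by blast
  moreover have "homog (Car A) ds xs" by (rule homog_mono[OF h]) (use gen_Car in blast)
  ultimately have "act A mu xs = 0"
    using palg_act_zero_slot[OF A_palg mu l] by blast
  then show ?thesis using lin_subspace_zero[OF gen_car_subspace] by simp
next
  case False
  have ld: "length ds = k" using homog_length[OF h] l by simp
  have ge: "bnd \<le> ds ! i" if "i < length ds" for i
    using gen_degree_ge[OF homog_nth[OF h]] False that ld l by auto
  have "ds ! i \<le> L - 1" if "i < length ds" for i
    using nth_le_sum_list_minus_bound[OF _ ge degree_bound_nonneg that] k ld sum degree_bound_ge by linarith
  then have "\<forall>d\<in>set ds. d \<le> L - 1" by (auto simp: in_set_conv_nth)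
  then have "monomial P A V (L - 1) (sum_list ds) (act A mu xs)"
    unfolding monomial_def using mu l h by blast
  then show ?thesis by (rule monomial_gen_car)
qed

lemma dif_gen_lower:
  assumes x: "x \<in> V d" and dL: "d \<le> L" shows "dif A x \<in> G (L - 1) (d + e)"
proof -
  have "dif A x \<in> lspan (asc A) {act A mu xs | mu k ds xs.
         2 \<le> k \<and> mu \<in> Pa P k \<and> length xs = k \<and> homog V ds xs \<and> sum_list ds = d + e}"
    using A_minimal x unfolding minimal_def by blast
  moreover have "{act A mu xs | mu k ds xs.
         2 \<le> k \<and> mu \<in> Pa P k \<and> length xs = k \<and> homog V ds xs \<and> sum_list ds = d + e} \<subseteq> G (L - 1) (d + e)"
    using decomposable_monomial_lower dL by fastforce
  ultimately show ?thesis using lspan_subset_subspace[OF gen_car_subspace] by blast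
qed

lemma f_dif_gen_boundary: "v \<in> V L \<Longrightarrow> \<exists>y\<in>Car B L. dif B y = f (dif A v)"
proof -
  assume v: "v \<in> V L"
  have dv: "dif A v \<in> G (L - 1) (L + e)" using dif_gen_lower[OF v] by simp
  have "dif B (f (dif A v)) = f (dif A (dif A v))" using f_dif[OF dv] by simp
  also have "\<dots> = 0" using dgpalg_dif_dif[OF A_dg gen_Car[OF v]] f_zero by simp
  finally have "dif B (f (dif A v)) = 0" .
  then show ?thesis
    using f_Car[OF dv] B_homology L_gt_n unfolding homology_le_def by fastforce
qed

definition lift where
  "lift = (SOME l. Vector_Spaces.linear (asc A) (asc B) l \<and> (\<forall>v\<in>V L. l v \<in> Car B L \<and> dif B (l v) = f (dif A v)))"

lemma lift_spec: "Vector_Spaces.linear (asc A) (asc B) lift \<and> (\<forall>v\<in>V L. lift v \<in> Car B L \<and> dif B (lift v) = f (dif A v))"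
proof -
  have "\<exists>l. Vector_Spaces.linear (asc A) (asc B) l \<and> (\<forall>v\<in>V L. l v \<in> Car B L \<and> dif B (l v) = f (dif A v))"
  proof (rule linear_lift_exists[OF A_vector_space B_vector_space gen_subspace B_Car_subspace])
    show "dif B (x + y) = dif B x + dif B y" if "x \<in> Car B L" "y \<in> Car B L" for x y
      using dgpalg_dif_add[OF B_dg that] .
    show "dif B (asc B c x) = asc B c (dif B x)" if "x \<in> Car B L" for c x
      using dgpalg_dif_scale[OF B_dg that] .
    show "f (dif A (x + y)) = f (dif A x) + f (dif A y)" if "x \<in> V L" "y \<in> V L" for x y
      using dgpalg_dif_add[OF A_dg gen_Car[OF that(1)] gen_Car[OF that(2)]]
        f_add[OF dif_gen_lower[OF that(1)] dif_gen_lower[OF that(2)]] by simp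
    show "f (dif A (asc A c x)) = asc B c (f (dif A x))" if "x \<in> V L" for c x
      using dgpalg_dif_scale[OF A_dg gen_Car[OF that]] f_scale[OF dif_gen_lower[OF that]] by simp
  qed (use f_dif_gen_boundary in blast)
  then show ?thesis unfolding lift_def by (rule someI_ex)
qed

lemma lift_add: "lift (x + y) = lift x + lift y"
  using lift_spec unfolding Vector_Spaces.linear_iff by blast

lemma lift_scale: "lift (asc A c x) = asc B c (lift x)"
  using lift_spec unfolding Vector_Spaces.linear_iff by blast

lemma lift_Car: "x \<in> V L \<Longrightarrow> lift x \<in> Car B L"
  using lift_spec by blast

lemma lift_dif: "x \<in> V L \<Longrightarrow> dif B (lift x) = f (dif A x)"
  using lift_spec by blast

lemma lift_zero: "lift 0 = 0"
  using lift_add[of 0 0] by simp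

definition gen_map where
  "gen_map y = (if \<exists>d. d \<le> L - 1 \<and> y \<in> V d then f y else if y \<in> V L then lift y else 0)"

lemma gen_map_below: "y \<in> V d \<Longrightarrow> d \<le> L - 1 \<Longrightarrow> gen_map y = f y"
  unfolding gen_map_def by auto

lemma gen_map_top: assumes y: "y \<in> V L" shows "gen_map y = lift y"
proof (cases "\<exists>d. d \<le> L - 1 \<and> y \<in> V d")
  case True
  then obtain d where "d \<le> L - 1" "y \<in> V d" by blast
  then have "y = 0" using gen_disjoint[OF _ y] by force
  then show ?thesis using True f_zero lift_zero unfolding gen_map_def by simp
next
  case False then show ?thesis
    unfolding gen_map_def using y by (simp only: if_not_P[OF False] if_P[OF y] if_True if_False)
qed

lemma gen_map_above: assumes y: "y \<in> V d" and dL: "L < d" shows "gen_map y = 0"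
proof (cases "y = 0")
  case True then show ?thesis unfolding gen_map_def using f_zero lift_zero by simp
next
  case False
  have n1: "\<not> (\<exists>d. d \<le> L - 1 \<and> y \<in> V d)" using gen_disjoint[OF _ y] False dL by force
  have n2: "y \<notin> V L" using gen_disjoint[OF _ y] False dL by force
  show ?thesis unfolding gen_map_def by (simp only: if_not_P[OF n1] if_not_P[OF n2] if_False)
qed

lemma gen_map_Car: assumes y: "y \<in> V d" shows "gen_map y \<in> Car B d"
proof -
  consider "d \<le> L - 1" | "d = L" | "L < d" by linarith
  then show ?thesis
  proof cases
    case 1 then show ?thesis using gen_map_below[OF y] f_Car[OF gen_gen_car[OF y]] by simp
  next
    case 2 then show ?thesis using gen_map_top y lift_Car by simp
  next
    case 3 then show ?thesis using gen_map_above[OF y] lin_subspace_zero[OF B_Car_subspace] by simp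
  qed
qed

lemma gen_map_add: assumes x: "x \<in> V d" and y: "y \<in> V d" shows "gen_map (x + y) = gen_map x + gen_map y"
proof -
  have xy: "x + y \<in> V d" using lin_subspace_add[OF gen_subspace x y] .
  consider "d \<le> L - 1" | "d = L" | "L < d" by linarith
  then show ?thesis
  proof cases
    case 1 then show ?thesis
      using gen_map_below[OF x] gen_map_below[OF y] gen_map_below[OF xy] f_add[OF gen_gen_car[OF x] gen_gen_car[OF y]]
      by simp
  next
    case 2 then show ?thesis using gen_map_top x y xy lift_add by simp
  next
    case 3 then show ?thesis using gen_map_above[OF x] gen_map_above[OF y] gen_map_above[OF xy] by simp
  qed
qed

lemma gen_map_scale: assumes x: "x \<in> V d" shows "gen_map (asc A c x) = asc B c (gen_map x)"
proof -
  have cx: "asc A c x \<in> V d" using lin_subspace_scale[OF gen_subspace x] .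
  consider "d \<le> L - 1" | "d = L" | "L < d" by linarith
  then show ?thesis
  proof cases
    case 1 then show ?thesis using gen_map_below[OF x] gen_map_below[OF cx] f_scale[OF gen_gen_car[OF x]] by simp
  next
    case 2 then show ?thesis using gen_map_top x cx lift_scale by simp
  next
    case 3 then show ?thesis
      using gen_map_above[OF x] gen_map_above[OF cx] module.scale_zero_right[OF B_module] by simp
  qed
qed

lemma gen_assignment_gen_map: "gen_assignment P A V B gen_map"
  by (unfold_locales) (auto intro: B_palg gen_map_Car gen_map_add gen_map_scale)

definition formal_comb :: "int \<Rightarrow> int \<Rightarrow> (('o \<times> (int \<times> 'a) list) \<Rightarrow> 'k) \<Rightarrow> bool" where
  "formal_comb m j s \<longleftrightarrow> finite {g. s g \<noteq> 0} \<and> (\<forall>g. s g \<noteq> 0 \<longrightarrow> g \<in> free_gens P V \<and>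
      (\<forall>p\<in>set (snd g). fst p \<le> m) \<and> sum_list (map fst (snd g)) = j)"

abbreviation evalA where "evalA s \<equiv> eval_comb A (\<lambda>x. x) s"
abbreviation evalB where "evalB s \<equiv> eval_comb B gen_map s"

lemma formal_comb_supportD:
  assumes "formal_comb m j s" "s g \<noteq> 0"
  shows "g \<in> free_gens P V" "\<forall>p\<in>set (snd g). fst p \<le> m" "sum_list (map fst (snd g)) = j"
  using assms unfolding formal_comb_def by blast+

lemma formal_comb_finite: "formal_comb m j s \<Longrightarrow> finite {g. s g \<noteq> 0}"
  unfolding formal_comb_def by (rule conjunct1)

lemma formal_comb_mono: "formal_comb m j s \<Longrightarrow> m \<le> m' \<Longrightarrow> formal_comb m' j s"
  unfolding formal_comb_def by fastforce

lemma formal_comb_zero: "formal_comb m j (\<lambda>_. 0)" unfolding formal_comb_def by simp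

lemma formal_comb_lincomb:
  assumes sa: "formal_comb m j sa" and sb: "formal_comb m j sb"
  shows "formal_comb m j (\<lambda>g. a * sa g + b * sb g)"
proof -
  have "g \<in> free_gens P V \<and> (\<forall>p\<in>set (snd g). fst p \<le> m) \<and> sum_list (map fst (snd g)) = j"
    if "a * sa g + b * sb g \<noteq> 0" for g
  proof -
    from that consider "sa g \<noteq> 0" | "sb g \<noteq> 0" by fastforce
    then show ?thesis by cases (use formal_comb_supportD[OF sa] formal_comb_supportD[OF sb] in blast)+
  qed
  moreover have "finite {g. a * sa g + b * sb g \<noteq> 0}"
    using formal_comb_finite[OF sa] formal_comb_finite[OF sb] by (rule finite_support_lincomb)
  ultimately show ?thesis unfolding formal_comb_def by blast
qed

lemma formal_comb_gen: assumes mu: "mu \<in> Pa P k" and l: "length xs = k" and h: "homog V ds xs"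
  and dm: "\<forall>d\<in>set ds. d \<le> m" and sj: "sum_list ds = j"
  shows "formal_comb m j (dlt (mu, zip ds xs))"
proof -
  have ld: "length ds = length xs" using homog_length[OF h] .
  have g: "(mu, zip ds xs) \<in> free_gens P V" unfolding free_gens_iff
  proof
    show "mu \<in> Pa P (length (zip ds xs))" using mu l ld by simp
    show "\<forall>p\<in>set (zip ds xs). snd p \<in> V (fst p)"
    proof
      fix p assume "p \<in> set (zip ds xs)"
      then obtain i where "i < length xs" "p = (ds ! i, xs ! i)" using ld by (auto simp: set_zip)
      then show "snd p \<in> V (fst p)" using homog_nth[OF h] by simp
    qed
  qed
  have "\<forall>p\<in>set (zip ds xs). fst p \<le> m" using dm by (auto dest: set_zip_leftD)
  moreover have "sum_list (map fst (zip ds xs)) = j" using ld sj by simp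
  ultimately show ?thesis using g finite_support_dlt unfolding formal_comb_def dlt_def by (auto split: if_splits)
qed

lemma eval_gen_zip: "length ds = length xs \<Longrightarrow> eval_gen C h (mu, zip ds xs) = act C mu (map h xs)"
  unfolding eval_gen_def by (simp add: map_snd_zip_apply)

lemma gen_car_formal_comb: "x \<in> G m j \<Longrightarrow> \<exists>s. formal_comb m j s \<and> evalA s = x"
  unfolding gen_car_eq
proof (induction rule: lspan_induct)
  case zero then show ?case using formal_comb_zero eval_comb_zero by blast
next
  case (scale_add c y z)
  obtain s where s: "formal_comb m j s" "evalA s = z" using scale_add(3) by blast
  obtain mu k ds xs where h: "mu \<in> Pa P k" "length xs = k" "homog V ds xs" "\<forall>d\<in>set ds. d \<le> m"
    "sum_list ds = j" "y = act A mu xs" using scale_add(1) unfolding monomial_def by blast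
  have ld: "length ds = length xs" using homog_length[OF h(3)] .
  have r: "formal_comb m j (dlt (mu, zip ds xs))" using formal_comb_gen[OF h(1-5)] .
  have fr: "finite {g. dlt (mu, zip ds xs) g \<noteq> (0::'k)}" "finite {g. s g \<noteq> 0}"
    using r s(1) unfolding formal_comb_def by auto
  have "evalA (\<lambda>g. c * dlt (mu, zip ds xs) g + 1 * s g) = asc A c (evalA (dlt (mu, zip ds xs))) + asc A 1 (evalA s)"
    by (rule eval_comb_lincomb[OF A_vector_space fr])
  also have "\<dots> = asc A c y + z"
    using h(6) s(2) by (simp add: module.scale_one[OF A_module] eval_comb_dlt[OF A_vector_space] eval_gen_zip[OF ld])
  finally show ?case using formal_comb_lincomb[OF r s(1), of c 1] by blast
qed

lemma eval_gen_monomial: "g \<in> free_gens P V \<Longrightarrow> (\<forall>p\<in>set (snd g). fst p \<le> m) \<Longrightarrow> sum_list (map fst (snd g)) = j \<Longrightarrow>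
   monomial P A V m j (eval_gen A (\<lambda>x. x) g)"
proof -
  assume g: "g \<in> free_gens P V" and m: "\<forall>p\<in>set (snd g). fst p \<le> m" and j: "sum_list (map fst (snd g)) = j"
  obtain mu dxs where gd: "g = (mu, dxs)" by (cases g)
  have hv: "\<forall>p\<in>set dxs. snd p \<in> V (fst p)" using g[unfolded gd free_gens_iff] by (rule conjunct2)
  have "homog V (map fst dxs) (map snd dxs)" unfolding homog_def using hv nth_mem by fastforce
  moreover have "mu \<in> Pa P (length (map snd dxs))" using g[unfolded gd free_gens_iff] by simp
  ultimately show ?thesis unfolding monomial_def eval_gen_def using gd m j by fastforce
qed

lemma evalA_gen_car: assumes s: "formal_comb m j s" shows "evalA s \<in> G m j"
  unfolding eval_comb_def
proof (rule lin_subspace_sum_scale[OF gen_car_subspace])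
  fix g assume "g \<in> {g. s g \<noteq> 0}"
  then show "eval_gen A (\<lambda>x. x) g \<in> G m j"
    using monomial_gen_car eval_gen_monomial formal_comb_supportD[OF s] by blast
qed

lemma evalB_Car: assumes s: "formal_comb m j s" shows "evalB s \<in> Car B j"
  unfolding eval_comb_def
proof (rule lin_subspace_sum_scale[OF B_Car_subspace])
  fix g assume "g \<in> {g. s g \<noteq> 0}"
  moreover obtain mu dxs where gd: "g = (mu, dxs)" by (cases g)
  ultimately have g: "(mu, dxs) \<in> free_gens P V" "sum_list (map fst dxs) = j"
    using formal_comb_supportD[OF s] by auto
  have "act B mu (map (\<lambda>p. gen_map (snd p)) dxs) \<in> Car B (sum_list (map fst dxs))"
    by (rule palg_act_Car[OF B_palg _ _ gen_assignment.homog_gen_image[OF gen_assignment_gen_map g(1)]])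
      (use g(1) in \<open>auto simp: free_gens_iff\<close>)
  then show "eval_gen B gen_map g \<in> Car B j" using g(2) unfolding eval_gen_def gd by simp
qed

lemma evalB_well_defined:
  assumes sa: "formal_comb L j sa" and sb: "formal_comb L j sb" and eq: "evalA sa = evalA sb"
  shows "evalB sa = evalB sb"
proof -
  define s where "s = (\<lambda>g. 1 * sa g + (-1) * sb g)"
  have s: "formal_comb L j s" unfolding s_def by (rule formal_comb_lincomb[OF sa sb])
  have fa: "finite {g. sa g \<noteq> 0}" and fb: "finite {g. sb g \<noteq> 0}"
    using formal_comb_finite sa sb by auto
  have "evalA s = evalA sa - evalA sb"
    unfolding s_def eval_comb_lincomb[OF A_vector_space fa fb]
    by (simp add: module.scale_one[OF A_module] module.scale_minus_left[OF A_module])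
  then have "s \<in> rspan (free_rels P A V)"
    using eq quasi_free_eval_inj[OF A_qf formal_comb_finite[OF s], of j] formal_comb_supportD[OF s] by simp
  then have "evalB s = 0" using gen_assignment.eval_rspan[OF gen_assignment_gen_map] by blast
  moreover have "evalB s = evalB sa - evalB sb"
    unfolding s_def eval_comb_lincomb[OF B_vector_space fa fb]
    by (simp add: module.scale_one[OF B_module] module.scale_minus_left[OF B_module])
  ultimately show ?thesis by simp
qed

text \<open>Outside A_L the choice is arbitrary; on A_L the value does not depend on the representative
  by evalB_well_defined.\<close>

definition extend where "extend x = (SOME y. \<exists>j s. formal_comb L j s \<and> evalA s = x \<and> y = evalB s)"

lemma extend_evalA: assumes s: "formal_comb L j s" shows "extend (evalA s) = evalB s"
proof -
  have "\<exists>y j s'. formal_comb L j s' \<and> evalA s' = evalA s \<and> y = evalB s'" using s by blast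
  from someI_ex[OF this] obtain j' s' where s': "formal_comb L j' s'" "evalA s' = evalA s"
    "extend (evalA s) = evalB s'"
    unfolding extend_def by blast
  show ?thesis
  proof (cases "j' = j")
    case True then show ?thesis using evalB_well_defined[OF s'(1) _ s'(2)] s s'(3) by simp
  next
    case False
    have "evalA s \<in> Car A j'" using gen_car_Car[OF evalA_gen_car[OF s'(1)]] s'(2) by simp
    then have "evalA s = 0" using palg_Car_disjoint[OF A_palg False _ gen_car_Car[OF evalA_gen_car[OF s]]] by blast
    then have "evalB s = 0" "evalB s' = 0"
      using evalB_well_defined[OF s formal_comb_zero] evalB_well_defined[OF s'(1) formal_comb_zero] s'(2)
      by (simp_all add: eval_comb_zero)
    then show ?thesis using s'(3) by simp
  qed
qed

lemma extend_Car: "x \<in> G L j \<Longrightarrow> extend x \<in> Car B j"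
  using gen_car_formal_comb extend_evalA evalB_Car by metis

lemma extend_lincomb:
  assumes x: "x \<in> G L j" and y: "y \<in> G L j"
  shows "extend (asc A a x + asc A b y) = asc B a (extend x) + asc B b (extend y)"
proof -
  obtain sx where sx: "formal_comb L j sx" "evalA sx = x" using gen_car_formal_comb[OF x] by blast
  obtain sy where sy: "formal_comb L j sy" "evalA sy = y" using gen_car_formal_comb[OF y] by blast
  have fx: "finite {g. sx g \<noteq> 0}" and fy: "finite {g. sy g \<noteq> 0}" using formal_comb_finite sx sy by auto
  have "extend (evalA (\<lambda>g. a * sx g + b * sy g)) = evalB (\<lambda>g. a * sx g + b * sy g)"
    by (rule extend_evalA[OF formal_comb_lincomb[OF sx(1) sy(1)]])
  then show ?thesis
    unfolding eval_comb_lincomb[OF A_vector_space fx fy] eval_comb_lincomb[OF B_vector_space fx fy]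
    using extend_evalA[OF sx(1)] extend_evalA[OF sy(1)] sx(2) sy(2) by simp
qed

lemma extend_add: "x \<in> G L j \<Longrightarrow> y \<in> G L j \<Longrightarrow> extend (x + y) = extend x + extend y"
  using extend_lincomb[of x j y 1 1] by (simp add: module.scale_one[OF A_module] module.scale_one[OF B_module])

lemma extend_scale: "x \<in> G L j \<Longrightarrow> extend (asc A c x) = asc B c (extend x)"
  using extend_lincomb[of x j x c 0]
  by (simp add: module.scale_zero_left[OF A_module] module.scale_zero_left[OF B_module])

lemma extend_scale_add: "x \<in> G L j \<Longrightarrow> y \<in> G L j \<Longrightarrow> extend (asc A c x + y) = asc B c (extend x) + extend y"
  using extend_add extend_scale lin_subspace_scale[OF gen_car_subspace] by metis

lemma extend_zero: "extend 0 = 0"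
  using extend_add[OF lin_subspace_zero[OF gen_car_subspace] lin_subspace_zero[OF gen_car_subspace]] by simp

lemma extend_act_gens: assumes mu: "mu \<in> Pa P k" and l: "length xs = k" and h: "homog V ds xs"
  and dm: "\<forall>d\<in>set ds. d \<le> L"
  shows "extend (act A mu xs) = act B mu (map gen_map xs)"
proof -
  have ld: "length ds = length xs" using homog_length[OF h] .
  have r: "formal_comb L (sum_list ds) (dlt (mu, zip ds xs))" using formal_comb_gen[OF mu l h dm refl] .
  have "evalA (dlt (mu, zip ds xs)) = act A mu xs" by (simp add: eval_comb_dlt[OF A_vector_space] eval_gen_zip[OF ld])
  moreover have "evalB (dlt (mu, zip ds xs)) = act B mu (map gen_map xs)"
    by (simp add: eval_comb_dlt[OF B_vector_space] eval_gen_zip[OF ld])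
  ultimately show ?thesis using extend_evalA[OF r] by simp
qed

lemma extend_gen: assumes x: "x \<in> V d" and dL: "d \<le> L" shows "extend x = gen_map x"
proof -
  have "extend (act A (ounit P) [x]) = act B (ounit P) (map gen_map [x])"
    by (rule extend_act_gens[OF operad_unit_Pa[OF P_operad], where xs="[x]" and ds="[d]"])
      (use x dL in \<open>auto simp: homog_def\<close>)
  then show ?thesis using palg_act_unit[OF A_palg gen_Car[OF x]] palg_act_unit[OF B_palg gen_map_Car[OF x]] by simp
qed

lemma extend_extends_f: assumes x: "x \<in> G (L - 1) j" shows "extend x = f x"
proof -
  obtain s where s: "formal_comb (L - 1) j s" "evalA s = x" using gen_car_formal_comb[OF x] by blast
  have gx: "extend x = evalB s" using extend_evalA[OF formal_comb_mono[OF s(1)]] s(2) by simp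
  have tW: "eval_gen A (\<lambda>x. x) g \<in> G (L - 1) j" if "g \<in> {g. s g \<noteq> 0}" for g
  proof -
    have sg: "s g \<noteq> 0" using that by simp
    show ?thesis using monomial_gen_car eval_gen_monomial formal_comb_supportD[OF s(1) sg] by blast
  qed
  have "f x = (\<Sum>g\<in>{g. s g \<noteq> 0}. asc B (s g) (f (eval_gen A (\<lambda>x. x) g)))"
    unfolding s(2)[symmetric] eval_comb_def
    by (rule additive_sum_scale[OF gen_car_subspace]) (auto intro: f_add f_scale tW)
  also have "\<dots> = evalB s" unfolding eval_comb_def
  proof (rule sum.cong[OF refl])
    fix g assume "g \<in> {g. s g \<noteq> 0}"
    then have g: "g \<in> free_gens P V" "\<forall>p\<in>set (snd g). fst p \<le> L - 1" using formal_comb_supportD[OF s(1)] by auto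
    obtain mu dxs where gd: "g = (mu, dxs)" by (cases g)
    have mu: "mu \<in> Pa P (length (map snd dxs))" and hv: "\<forall>p\<in>set dxs. snd p \<in> V (fst p)"
      using g(1)[unfolded gd free_gens_iff] by auto
    have hG: "homog (G (L - 1)) (map fst dxs) (map snd dxs)"
      unfolding homog_def using hv g(2) gd by (auto intro!: gen_gen_car)
    have "f (eval_gen A (\<lambda>x. x) g) = act B mu (map f (map snd dxs))"
      unfolding gd eval_gen_def using f_act[OF mu refl hG] by simp
    also have "map f (map snd dxs) = map (\<lambda>p. gen_map (snd p)) dxs"
      using hv g(2) gd by (auto intro!: gen_map_below[symmetric])
    finally show "asc B (s g) (f (eval_gen A (\<lambda>x. x) g)) = asc B (s g) (eval_gen B gen_map g)"
      unfolding gd eval_gen_def by simp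
  qed
  finally show ?thesis using gx by simp
qed

abbreviation act_compatible :: "'o \<Rightarrow> int list \<Rightarrow> 'a list \<Rightarrow> bool" where
  "act_compatible mu ds xs \<equiv>
     act A mu xs \<in> G L (sum_list ds) \<and> extend (act A mu xs) = act B mu (map extend xs)"

lemma monomials_decompose:
  assumes "\<forall>i<k. monomial P A V L (ds ! i) (xs ! i)"
  obtains nus dss yss where "length nus = k" "length dss = k" "length yss = k"
    "\<And>i. i < k \<Longrightarrow> nus ! i \<in> Pa P (length (yss ! i)) \<and> homog V (dss ! i) (yss ! i) \<and>
       (\<forall>d\<in>set (dss ! i). d \<le> L) \<and> sum_list (dss ! i) = ds ! i \<and> xs ! i = act A (nus ! i) (yss ! i)"
proof -
  have "\<forall>i\<in>{..<k}. \<exists>t. fst t \<in> Pa P (length (snd (snd t))) \<and> homog V (fst (snd t)) (snd (snd t)) \<and>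
      (\<forall>d\<in>set (fst (snd t)). d \<le> L) \<and> sum_list (fst (snd t)) = ds ! i \<and> xs ! i = act A (fst t) (snd (snd t))"
    using assms unfolding monomial_def by fastforce
  then obtain T where T: "\<And>i. i < k \<Longrightarrow> fst (T i) \<in> Pa P (length (snd (snd (T i)))) \<and>
      homog V (fst (snd (T i))) (snd (snd (T i))) \<and> (\<forall>d\<in>set (fst (snd (T i))). d \<le> L) \<and>
      sum_list (fst (snd (T i))) = ds ! i \<and> xs ! i = act A (fst (T i)) (snd (snd (T i)))"
    using bchoice[of "{..<k}"] by (metis lessThan_iff)
  show thesis
    by (rule that[of "map (\<lambda>i. fst (T i)) [0..<k]" "map (\<lambda>i. fst (snd (T i))) [0..<k]"
          "map (\<lambda>i. snd (snd (T i))) [0..<k]"]) (simp_all add: T)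
qed

text \<open>Associativity of the operad action reduces an operation applied to monomials to a single
  monomial, on which extend is computed by gen_map.\<close>

lemma extend_act_monomials:
  assumes mu: "mu \<in> Pa P k" and l: "length xs = k" and ld: "length ds = k"
    and mono: "\<forall>i<k. monomial P A V L (ds ! i) (xs ! i)"
  shows "act_compatible mu ds xs"
proof -
  obtain nus dss yss where len: "length nus = k" "length dss = k" "length yss = k"
    and T: "\<And>i. i < k \<Longrightarrow> nus ! i \<in> Pa P (length (yss ! i)) \<and> homog V (dss ! i) (yss ! i) \<and>
       (\<forall>d\<in>set (dss ! i). d \<le> L) \<and> sum_list (dss ! i) = ds ! i \<and> xs ! i = act A (nus ! i) (yss ! i)"
    using monomials_decompose[OF mono] by blast
  have xs_eq: "xs = map (\<lambda>i. act A (nus ! i) (yss ! i)) [0..<k]"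
    by (rule nth_equalityI) (use l T in auto)
  have comp: "act A (ocomp P mu nus) (concat yss) = act A mu xs"
    unfolding xs_eq by (rule palg_act_ocomp[OF A_palg mu len(1) len(3)])
      (use T homog_mono gen_Car in blast)
  have op: "ocomp P mu nus \<in> Pa P (length (concat yss))"
    using operad_ocomp_Pa[OF P_operad mu len(1), of "map length yss"] T len by (simp add: length_concat)
  have hc: "homog V (concat dss) (concat yss)"
    by (rule homog_concat) (use len T in auto)
  have bd: "\<forall>d\<in>set (concat dss). d \<le> L"
    using T len by (fastforce simp: in_set_conv_nth)
  have "map sum_list dss = ds" by (rule nth_equalityI) (use len ld T in auto)
  then have "sum_list (concat dss) = sum_list ds" by (simp add: sum_list_concat)
  then have "monomial P A V L (sum_list ds) (act A mu xs)"
    unfolding monomial_def using op hc bd comp[symmetric] by blast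
  then have in_G: "act A mu xs \<in> G L (sum_list ds)" by (rule monomial_gen_car)
  have ext: "extend (act A mu xs) = act B (ocomp P mu nus) (map gen_map (concat yss))"
    using extend_act_gens[OF op refl hc bd] comp by simp
  have hB: "homog (Car B) (dss ! i) (map gen_map (yss ! i))" if "i < k" for i
    by (rule homog_map) (use T[OF that] homog_nth gen_map_Car in blast)+
  have "act B (ocomp P mu nus) (concat (map (map gen_map) yss))
      = act B mu (map (\<lambda>i. act B (nus ! i) (map (map gen_map) yss ! i)) [0..<k])"
    by (rule palg_act_ocomp[OF B_palg mu len(1)]) (use len T hB in auto)
  also have "map (\<lambda>i. act B (nus ! i) (map (map gen_map) yss ! i)) [0..<k] = map extend xs"
  proof (rule nth_equalityI)
    fix i assume "i < length (map (\<lambda>i. act B (nus ! i) (map (map gen_map) yss ! i)) [0..<k])"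
    then have i: "i < k" by simp
    then show "map (\<lambda>i. act B (nus ! i) (map (map gen_map) yss ! i)) [0..<k] ! i = map extend xs ! i"
      using extend_act_gens[of "nus ! i" "length (yss ! i)" "yss ! i" "dss ! i"] T[OF i] l len by simp
  qed (use l in simp)
  finally show ?thesis using in_G ext by (simp add: map_concat)
qed

lemma act_compatible_slot_zero:
  assumes mu: "mu \<in> Pa P k" and l: "length xs = k" and hG: "homog (G L) ds xs" and r: "r < k"
  shows "act_compatible mu ds (xs[r := 0])"
proof -
  have "act A mu (xs[r := 0]) = 0"
    by (rule palg_act_zero_slot[OF A_palg mu _ homog_update[OF homog_mono[OF hG]]])
      (use r l gen_car_Car lin_subspace_zero[OF A_Car_subspace] in auto)
  moreover have "act B mu ((map extend xs)[r := 0]) = 0"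
    by (rule palg_act_zero_slot[OF B_palg mu _ homog_update[OF homog_map[OF hG]]])
      (use r l homog_nth[OF hG] extend_Car lin_subspace_zero[OF B_Car_subspace] in auto)
  ultimately show ?thesis using extend_zero lin_subspace_zero[OF gen_car_subspace] by (simp add: map_update)
qed

lemma act_compatible_slot_scale_add:
  assumes mu: "mu \<in> Pa P k" and l: "length xs = k" and hG: "homog (G L) ds xs" and r: "r < k"
    and y: "y \<in> G L (ds ! r)" and z: "z \<in> G L (ds ! r)"
    and IH: "act_compatible mu ds (xs[r := y])" "act_compatible mu ds (xs[r := z])"
  shows "act_compatible mu ds (xs[r := asc A c y + z])"
proof -
  have hA: "homog (Car A) ds xs" by (rule homog_mono[OF hG]) (use gen_car_Car in blast)
  have hB: "homog (Car B) ds (map extend xs)"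
    by (rule homog_map[OF hG]) (use homog_nth[OF hG] extend_Car in blast)
  have yz_A: "y \<in> Car A (ds ! r)" "z \<in> Car A (ds ! r)" "asc A c y \<in> Car A (ds ! r)"
    using gen_car_Car y z lin_subspace_scale[OF A_Car_subspace] by blast+
  have yz_B: "extend y \<in> Car B (ds ! r)" "extend z \<in> Car B (ds ! r)" "asc B c (extend y) \<in> Car B (ds ! r)"
    using extend_Car y z lin_subspace_scale[OF B_Car_subspace] by blast+
  have act_A: "act A mu (xs[r := asc A c y + z]) = asc A c (act A mu (xs[r := y])) + act A mu (xs[r := z])"
    using palg_act_add_slot[OF A_palg mu l hA r yz_A(3,2)] palg_act_scale_slot[OF A_palg mu l hA r yz_A(1)]
    by simp
  have act_B: "act B mu ((map extend xs)[r := asc B c (extend y) + extend z])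
      = asc B c (act B mu ((map extend xs)[r := extend y])) + act B mu ((map extend xs)[r := extend z])"
    using palg_act_add_slot[OF B_palg mu _ hB r yz_B(3,2)] palg_act_scale_slot[OF B_palg mu _ hB r yz_B(1)] l
    by simp
  have "extend (act A mu (xs[r := asc A c y + z]))
      = asc B c (extend (act A mu (xs[r := y]))) + extend (act A mu (xs[r := z]))"
    unfolding act_A using IH extend_scale_add[of "act A mu (xs[r := y])" "sum_list ds"] by simp
  then have "extend (act A mu (xs[r := asc A c y + z])) = act B mu (map extend (xs[r := asc A c y + z]))"
    using IH act_B extend_scale_add[OF y z] by (simp add: map_update)
  moreover have "act A mu (xs[r := asc A c y + z]) \<in> G L (sum_list ds)"
    unfolding act_A using IH
    by (intro lin_subspace_add[OF gen_car_subspace] lin_subspace_scale[OF gen_car_subspace]) auto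
  ultimately show ?thesis by blast
qed

lemma extend_act_slot:
  assumes mu: "mu \<in> Pa P k" and l: "length xs = k" and hG: "homog (G L) ds xs" and r: "r < k"
    and mono: "\<And>y. monomial P A V L (ds ! r) y \<Longrightarrow> act_compatible mu ds (xs[r := y])"
  shows "act_compatible mu ds xs"
proof -
  have "xs ! r \<in> lspan (asc A) (Collect (monomial P A V L (ds ! r)))"
    using homog_nth[OF hG] r l unfolding gen_car_eq by simp
  then have "act_compatible mu ds (xs[r := xs ! r])"
  proof (induction rule: lspan_induct)
    case zero
    show ?case by (rule act_compatible_slot_zero[OF mu l hG r])
  next
    case (scale_add c y z)
    show ?case
    proof (rule act_compatible_slot_scale_add[OF mu l hG r])
      show "y \<in> G L (ds ! r)" using scale_add(1) by (simp add: monomial_gen_car)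
      show "z \<in> G L (ds ! r)" using scale_add(2) unfolding gen_car_eq .
    qed (use mono[of y] scale_add(1,3) in auto)
  qed
  then show ?thesis by simp
qed

lemma extend_act_monomials_from:
  "mu \<in> Pa P k \<Longrightarrow> length xs = k \<Longrightarrow> homog (G L) ds xs \<Longrightarrow>
   \<forall>i. r \<le> i \<and> i < k \<longrightarrow> monomial P A V L (ds ! i) (xs ! i) \<Longrightarrow> act_compatible mu ds xs"
proof (induction r arbitrary: xs)
  case 0
  then show ?case by (intro extend_act_monomials) (use homog_length[OF 0(3)] in auto)
next
  case (Suc r)
  show ?case
  proof (cases "r < k")
    case False
    then show ?thesis using Suc.IH[OF Suc.prems(1-3)] Suc.prems(4) by auto
  next
    case True
    show ?thesis
    proof (rule extend_act_slot[OF Suc.prems(1-3) True])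
      fix y assume y: "monomial P A V L (ds ! r) y"
      show "act_compatible mu ds (xs[r := y])"
      proof (rule Suc.IH)
        show "homog (G L) ds (xs[r := y])"
          by (rule homog_update[OF Suc.prems(3)]) (use True Suc.prems(2) y monomial_gen_car in auto)
        show "\<forall>i. r \<le> i \<and> i < k \<longrightarrow> monomial P A V L (ds ! i) (xs[r := y] ! i)"
          using Suc.prems(2,4) y by (auto simp: nth_list_update Suc_le_eq)
      qed (use Suc.prems in auto)
    qed
  qed
qed

lemma extend_act: "mu \<in> Pa P k \<Longrightarrow> length xs = k \<Longrightarrow> homog (G L) ds xs \<Longrightarrow> act_compatible mu ds xs"
  by (rule extend_act_monomials_from[of _ _ _ _ k]) auto

lemma extend_dif_gen:
  assumes v: "v \<in> V d" and dL: "d \<le> L" shows "extend (dif A v) = dif B (gen_map v)"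
proof -
  have "extend (dif A v) = f (dif A v)" using extend_extends_f[OF dif_gen_lower[OF v dL]] .
  moreover have "f (dif A v) = dif B (gen_map v)"
  proof (cases "d \<le> L - 1")
    case True
    then show ?thesis using f_dif[OF gen_gen_car[OF v True]] gen_map_below[OF v True] by simp
  next
    case False
    then have "d = L" using dL by simp
    then show ?thesis using lift_dif gen_map_top v by simp
  qed
  ultimately show ?thesis by simp
qed

lemma extend_dif_slot:
  assumes nu: "nu \<in> Pa P k" and l: "length ys = k" and h: "homog V ds ys" and dL: "\<forall>d\<in>set ds. d \<le> L"
    and i: "i < k"
  shows "act A nu (ys[i := dif A (ys ! i)]) \<in> G L (sum_list ds + e) \<and>
    extend (act A nu (ys[i := dif A (ys ! i)])) = act B nu ((map gen_map ys)[i := dif B (gen_map (ys ! i))])"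
proof -
  have ld: "length ds = k" using homog_length[OF h] l by simp
  have dsL: "ds ! j \<le> L" if "j < k" for j using dL that ld by auto
  have yV: "ys ! j \<in> V (ds ! j)" if "j < k" for j using homog_nth[OF h] that l by simp
  have hG: "homog (G L) ds ys"
    by (rule homog_map[OF h, of "\<lambda>x. x", simplified]) (use yV dsL gen_gen_car l in auto)
  have "dif A (ys ! i) \<in> G L (ds ! i + e)"
    using gen_car_mono[OF _ dif_gen_lower[OF yV[OF i] dsL[OF i]]] by simp
  then have "homog (G L) (ds[i := ds ! i + e]) (ys[i := dif A (ys ! i)])"
    using homog_update_degree[OF hG] i l by simp
  then have act: "act_compatible nu (ds[i := ds ! i + e]) (ys[i := dif A (ys ! i)])"
    using extend_act[OF nu] l by simp
  have "sum_list (ds[i := ds ! i + e]) = sum_list ds + e" using sum_list_update_int[of i ds] i ld by simp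
  moreover have "map extend ys = map gen_map ys"
    by (rule nth_equalityI) (use extend_gen yV dsL l in auto)
  then have "map extend (ys[i := dif A (ys ! i)]) = (map gen_map ys)[i := dif B (gen_map (ys ! i))]"
    by (simp only: map_update extend_dif_gen[OF yV[OF i] dsL[OF i]])
  ultimately show ?thesis using act by simp
qed

text \<open>Both differentials act on P(-)-operations by the same Koszul-signed Leibniz rule, so
  compatibility with d reduces to the generators, where it holds by the choice of lift.\<close>

lemma extend_dif_monomial:
  assumes "monomial P A V L m y"
  shows "dif A y \<in> G L (m + e) \<and> extend (dif A y) = dif B (extend y)"
proof -
  obtain nu k ds ys where h: "nu \<in> Pa P k" "length ys = k" "homog V ds ys" "\<forall>d\<in>set ds. d \<le> L"
    "sum_list ds = m" "y = act A nu ys" using assms unfolding monomial_def by blast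
  define sgn where "sgn i = (ksign (e * sum_list (take i ds)) :: 'k)" for i
  define T where "T i = act A nu (ys[i := dif A (ys ! i)])" for i
  have T: "T i \<in> G L (m + e) \<and> extend (T i) = act B nu ((map gen_map ys)[i := dif B (map gen_map ys ! i)])"
    if "i < k" for i
    using extend_dif_slot[OF h(1-4) that] h(2,5) that unfolding T_def by simp
  have leibniz_A: "dif A y = (\<Sum>i<k. asc A (sgn i) (T i))"
    unfolding h(6) sgn_def T_def
    by (rule dgpalg_dif_act[OF A_dg h(1) h(2)]) (rule homog_mono[OF h(3)], use gen_Car in blast)
  have hB: "homog (Car B) ds (map gen_map ys)"
    by (rule homog_map[OF h(3)]) (use homog_nth[OF h(3)] gen_map_Car in blast)
  have "extend (dif A y) = (\<Sum>i<k. asc B (sgn i) (extend (T i)))"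
    unfolding leibniz_A by (rule additive_sum_scale[OF gen_car_subspace]) (use T extend_add extend_scale in auto)
  also have "\<dots> = (\<Sum>i<k. asc B (sgn i) (act B nu ((map gen_map ys)[i := dif B (map gen_map ys ! i)])))"
    using T by (auto intro!: sum.cong)
  also have "\<dots> = dif B (act B nu (map gen_map ys))"
    unfolding sgn_def using dgpalg_dif_act[OF B_dg h(1) _ hB] h(2) by simp
  also have "\<dots> = dif B (extend y)" using extend_act_gens[OF h(1-4)] h(6) by simp
  moreover have "dif A y \<in> G L (m + e)"
    unfolding leibniz_A by (rule lin_subspace_sum_scale[OF gen_car_subspace]) (use T in simp)
  ultimately show ?thesis by simp
qed

lemma extend_dif: "x \<in> G L m \<Longrightarrow> dif A x \<in> G L (m + e) \<and> extend (dif A x) = dif B (extend x)"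
  unfolding gen_car_eq[of P A V L m]
proof (induction rule: lspan_induct)
  case zero
  then show ?case using dif_A_zero dif_B_zero extend_zero lin_subspace_zero[OF gen_car_subspace] by simp
next
  case (scale_add c y z)
  have y: "y \<in> G L m" using scale_add(1) by (simp add: monomial_gen_car)
  have z: "z \<in> G L m" using scale_add(2) unfolding gen_car_eq .
  have dy: "dif A y \<in> G L (m + e) \<and> extend (dif A y) = dif B (extend y)"
    using extend_dif_monomial scale_add(1) by simp
  have dz: "dif A z \<in> G L (m + e) \<and> extend (dif A z) = dif B (extend z)" using scale_add(3) .
  have yz_A: "y \<in> Car A m" "z \<in> Car A m" using gen_car_Car y z by auto
  have yz_B: "extend y \<in> Car B m" "extend z \<in> Car B m" using extend_Car y z by auto
  have dif_A: "dif A (asc A c y + z) = asc A c (dif A y) + dif A z"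
    using dgpalg_dif_add[OF A_dg lin_subspace_scale[OF A_Car_subspace yz_A(1)] yz_A(2)]
      dgpalg_dif_scale[OF A_dg yz_A(1)] by simp
  have "extend (dif A (asc A c y + z)) = asc B c (extend (dif A y)) + extend (dif A z)"
    unfolding dif_A using dy dz extend_scale_add[of "dif A y" "m + e"] by simp
  also have "\<dots> = dif B (asc B c (extend y) + extend z)"
    using dy dz dgpalg_dif_add[OF B_dg lin_subspace_scale[OF B_Car_subspace yz_B(1)] yz_B(2)]
      dgpalg_dif_scale[OF B_dg yz_B(1)] by simp
  also have "\<dots> = dif B (extend (asc A c y + z))" using extend_scale_add[OF y z] by simp
  finally show ?case
    unfolding dif_A using dy dz
    by (simp add: lin_subspace_add[OF gen_car_subspace] lin_subspace_scale[OF gen_car_subspace])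
qed

lemma extension_exists:
  "\<exists>g. dg_hom P (subalg P A V L) B g \<and> (\<forall>m. \<forall>x\<in>Car (subalg P A V (L - 1)) m. g x = f x)"
proof (intro exI conjI)
  show "dg_hom P (subalg P A V L) B extend"
    unfolding dg_hom_def subalg_simps using extend_Car extend_add extend_scale extend_dif extend_act by blast
  show "\<forall>m. \<forall>x\<in>Car (subalg P A V (L - 1)) m. extend x = f x" using extend_extends_f by simp
qed

end

lemma cochain_extension:
  assumes P: "is_operad P" and A: "cochain_palg P A" and qf: "quasi_free P A V"
    and "minimal P 1 A V" and conn: "one_connected_cochain P A"
    and "cochain_palg P B" "homology_le 1 B n" "dg_hom P (subalg P A V (n - 1)) B f"
  shows "\<exists>g. dg_hom P (subalg P A V n) B g \<and> (\<forall>m. \<forall>x\<in>Car (subalg P A V (n - 1)) m. g x = f x)"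
proof -
  interpret extension_setting P A V B 1 2 n n f
  proof
    show "2 \<le> d" if "x \<in> V d" "x \<noteq> 0" for x d
      using cochain_gen_degree_ge_2[OF P _ qf conn that] A dgpalg_palg unfolding cochain_palg_def by blast
  qed (use assms in \<open>simp_all add: cochain_palg_def\<close>)
  show ?thesis by (rule extension_exists)
qed

lemma chain_extension:
  assumes P: "is_operad P" and A: "chain_palg P A" and qf: "quasi_free P A V"
    and "minimal P (-1) A V" and conn: "one_connected_chain P A"
    and "chain_palg P B" "homology_le (-1) B n" "dg_hom P (subalg P A V (n + 1)) B f"
  shows "\<exists>g. dg_hom P (subalg P A V (n + 2)) B g \<and> (\<forall>m. \<forall>x\<in>Car (subalg P A V (n + 1)) m. g x = f x)"
proof -
  have L: "n + 2 - 1 = n + 1" by simp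
  interpret extension_setting P A V B "-1" 1 "n + 2" n f
  proof
    show "1 \<le> d" if "x \<in> V d" "x \<noteq> 0" for x d
      using chain_gen_degree_ge_1[OF P _ qf conn that] A dgpalg_palg unfolding chain_palg_def by blast
  qed (use assms in \<open>simp_all add: chain_palg_def L\<close>)
  show ?thesis using extension_exists unfolding L .
qed

theorem mainTheorem4:
  fixes P :: "('k::field_char_0, 'o::ab_group_add) operad"
  assumes "std_operad P"
  shows
   "(\<forall>(A :: ('k, 'a::ab_group_add, 'o) dgpalg) V (B :: ('k, 'b::ab_group_add, 'o) dgpalg) n f.
       cochain_palg P A \<and> quasi_free P A V \<and> minimal P 1 A V \<and> one_connected_cochain P A \<and>
       cochain_palg P B \<and> homology_le 1 B n \<and>
       dg_hom P (subalg P A V (n - 1)) B f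
       \<longrightarrow> (\<exists>g. dg_hom P (subalg P A V n) B g \<and>
               (\<forall>m. \<forall>x\<in>Car (subalg P A V (n - 1)) m. g x = f x))) \<and>
    (\<forall>(A :: ('k, 'a::ab_group_add, 'o) dgpalg) V (B :: ('k, 'b::ab_group_add, 'o) dgpalg) n f.
       chain_palg P A \<and> quasi_free P A V \<and> minimal P (-1) A V \<and> one_connected_chain P A \<and>
       chain_palg P B \<and> homology_le (-1) B n \<and>
       dg_hom P (subalg P A V (n + 1)) B f
       \<longrightarrow> (\<exists>g. dg_hom P (subalg P A V (n + 2)) B g \<and>
               (\<forall>m. \<forall>x\<in>Car (subalg P A V (n + 1)) m. g x = f x)))"
proof -
  have P: "is_operad P" using assms unfolding std_operad_def by blast
  show ?thesis using cochain_extension[OF P] chain_extension[OF P] by blast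
qed

end
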